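(* For each $N\ge1$ let $\eta^N(t)$ be an irreducible continuous-time Markov chain on a finite set $\Omega_N$ with jump rates $R_N(\eta,\xi)$ and unique stationary distribution $\nu_N$; let $A_N\subset\Omega_N$ with $\lim_N\nu_N(A_N)=0$, $H_N=\inf\{t>0:\eta^N(t)\in A_N\}$, and assume $T^{\rm mix}_N\ll r_N(A_N^c,A_N)^{-1}$. Let $\mu_N$ be probability measures on $\Omega_N$ and suppose there is a sequence $S_N$ with $T^{\rm mix}_N\ll S_N\ll\mathbb E_{\nu_N}[H_N]$ such that $\lim_{N\to\infty}\mathbb P_{\mu_N}[H_N<S_N]=0$. Then, under $\mathbb P_{\mu_N}$, $H_N/\mathbb E_{\nu_N}[H_N]$ converges in distribution to a mean one exponential random variable.
   Context: $T^{\rm mix}_N=\inf\{t>0:\max_{\eta}\|P_t(\eta,\cdot)-\nu_N\|_{\rm TV}\le1/4\}$ where $P_t(\eta,\xi)=\mathbb P_\eta[\eta^N(t)=\xi]$. $R_N(\xi,A_N)=\sum_{\zeta\in A_N}R_N(\xi,\zeta)$, $r_N(A_N^c,A_N)=\frac1{\nu_N(A_N^c)}\sum_{\xi\in A_N^c}\nu_N(\xi)R_N(\xi,A_N)$. $a_N\ll b_N$ means $a_N/b_N\to0$. $\mathbb P_\mu,\mathbb E_\mu$ refer to the chain started from the distribution $\mu$. *)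

theory Defs
  imports "HOL-Probability.Probability"
begin

text \<open>Continuous-time Markov chains on a finite state space \<open>\<Omega>\<close> with jump rates \<open>R x y\<close>
  (for \<open>x \<noteq> y\<close>), described through their transition semigroup \<open>exp(t L)\<close>.\<close>

definition gen :: "'a set \<Rightarrow> ('a \<Rightarrow> 'a \<Rightarrow> real) \<Rightarrow> 'a \<Rightarrow> 'a \<Rightarrow> real" where
  "gen \<Omega> R x y = (if x = y then - (\<Sum>z\<in>\<Omega> - {x}. R x z) else R x y)"

fun mpow :: "'a set \<Rightarrow> ('a \<Rightarrow> 'a \<Rightarrow> real) \<Rightarrow> nat \<Rightarrow> 'a \<Rightarrow> 'a \<Rightarrow> real" where
  "mpow S Q 0 x y = (if x = y then 1 else 0)"
| "mpow S Q (Suc k) x y = (\<Sum>z\<in>S. Q x z * mpow S Q k z y)"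

definition mexp :: "'a set \<Rightarrow> ('a \<Rightarrow> 'a \<Rightarrow> real) \<Rightarrow> real \<Rightarrow> 'a \<Rightarrow> 'a \<Rightarrow> real" where
  "mexp S Q t x y = (\<Sum>k. t ^ k / fact k * mpow S Q k x y)"

text \<open>\<open>P_t(\<eta>,\<xi>) = P_\<eta>[\<eta>(t) = \<xi>]\<close>.\<close>
definition trans_prob :: "'a set \<Rightarrow> ('a \<Rightarrow> 'a \<Rightarrow> real) \<Rightarrow> real \<Rightarrow> 'a \<Rightarrow> 'a \<Rightarrow> real" where
  "trans_prob \<Omega> R t x y = mexp \<Omega> (gen \<Omega> R) t x y"

definition tv_dist :: "'a set \<Rightarrow> ('a \<Rightarrow> real) \<Rightarrow> ('a \<Rightarrow> real) \<Rightarrow> real" where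
  "tv_dist \<Omega> p q = (1/2) * (\<Sum>x\<in>\<Omega>. \<bar>p x - q x\<bar>)"

definition mixing_time :: "'a set \<Rightarrow> ('a \<Rightarrow> 'a \<Rightarrow> real) \<Rightarrow> ('a \<Rightarrow> real) \<Rightarrow> real" where
  "mixing_time \<Omega> R \<nu> =
     Inf {t. t > 0 \<and> (\<forall>\<eta>\<in>\<Omega>. tv_dist \<Omega> (trans_prob \<Omega> R t \<eta>) \<nu> \<le> 1/4)}"

text \<open>\<open>P_x[H_A > t]\<close> for \<open>H_A = inf{t>0. \<eta>(t) \<in> A}\<close>: zero if started in \<open>A\<close>
  (then \<open>H_A = 0\<close>), otherwise given by the semigroup of the chain killed upon entering \<open>A\<close>.\<close>
definition surv :: "'a set \<Rightarrow> ('a \<Rightarrow> 'a \<Rightarrow> real) \<Rightarrow> 'a set \<Rightarrow> 'a \<Rightarrow> real \<Rightarrow> real" where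
  "surv \<Omega> R A x t =
     (if t < 0 then 1 else if x \<in> A then 0
      else (\<Sum>y\<in>\<Omega> - A. mexp (\<Omega> - A) (gen \<Omega> R) t x y))"

definition hit_cdf :: "'a set \<Rightarrow> ('a \<Rightarrow> 'a \<Rightarrow> real) \<Rightarrow> 'a set \<Rightarrow> ('a \<Rightarrow> real) \<Rightarrow> real \<Rightarrow> real" where
  "hit_cdf \<Omega> R A \<mu> t = (\<Sum>x\<in>\<Omega>. \<mu> x * (1 - surv \<Omega> R A x t))"

text \<open>\<open>P_\<mu>[H_A < s]\<close> (left limit of the distribution function).\<close>
definition hit_lt :: "'a set \<Rightarrow> ('a \<Rightarrow> 'a \<Rightarrow> real) \<Rightarrow> 'a set \<Rightarrow> ('a \<Rightarrow> real) \<Rightarrow> real \<Rightarrow> real" where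
  "hit_lt \<Omega> R A \<mu> s = (SUP t\<in>{..<s}. hit_cdf \<Omega> R A \<mu> t)"

definition mean_hit :: "'a set \<Rightarrow> ('a \<Rightarrow> 'a \<Rightarrow> real) \<Rightarrow> 'a set \<Rightarrow> ('a \<Rightarrow> real) \<Rightarrow> real" where
  "mean_hit \<Omega> R A \<nu> = (\<Sum>x\<in>\<Omega>. \<nu> x * integral {0..} (surv \<Omega> R A x))"

definition escape_rate :: "'a set \<Rightarrow> ('a \<Rightarrow> 'a \<Rightarrow> real) \<Rightarrow> 'a set \<Rightarrow> ('a \<Rightarrow> real) \<Rightarrow> real" where
  "escape_rate \<Omega> R A \<nu> =
     (1 / (\<Sum>x\<in>\<Omega> - A. \<nu> x)) * (\<Sum>\<xi>\<in>\<Omega> - A. \<nu> \<xi> * (\<Sum>\<zeta>\<in>A. R \<xi> \<zeta>))"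

definition irreducible :: "'a set \<Rightarrow> ('a \<Rightarrow> 'a \<Rightarrow> real) \<Rightarrow> bool" where
  "irreducible \<Omega> R \<longleftrightarrow>
     (\<forall>x\<in>\<Omega>. \<forall>y\<in>\<Omega>. (x, y) \<in> {(u, v). u \<in> \<Omega> \<and> v \<in> \<Omega> \<and> u \<noteq> v \<and> R u v > 0}\<^sup>*)"

definition prob_on :: "'a set \<Rightarrow> ('a \<Rightarrow> real) \<Rightarrow> bool" where
  "prob_on \<Omega> \<mu> \<longleftrightarrow> (\<forall>x\<in>\<Omega>. \<mu> x \<ge> 0) \<and> (\<Sum>x\<in>\<Omega>. \<mu> x) = 1"

definition stationary :: "'a set \<Rightarrow> ('a \<Rightarrow> 'a \<Rightarrow> real) \<Rightarrow> ('a \<Rightarrow> real) \<Rightarrow> bool" where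
  "stationary \<Omega> R \<nu> \<longleftrightarrow> prob_on \<Omega> \<nu> \<and> (\<forall>y\<in>\<Omega>. (\<Sum>x\<in>\<Omega>. \<nu> x * gen \<Omega> R x y) = 0)"

end

theory Submission
  imports Defs
begin

text \<open>
  Started from equilibrium, the chain forgets its initial state within a lag \<open>\<tau>\<close> of a few mixing
  times. Hence the survival function \<open>F(t) = P_\<nu>[H > t]\<close> is approximately memoryless,
  \<open>F(t + \<tau> + s) \<approx> F(t) F(s)\<close>, with an error made of the total variation distance to \<open>\<nu>\<close> after
  time \<open>\<tau>\<close> and of \<open>P_\<nu>[H \<le> \<tau>] \<le> \<nu>(A) + \<tau> r(A\<^sup>c, A)\<close>. Taking \<open>\<tau>\<close> a slowly growing multiple of the
  mixing time makes this error vanish while \<open>\<tau>\<close> stays negligible against \<open>E_\<nu>[H]\<close>, and an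
  approximately memoryless survival function with mean \<open>T\<close> satisfies \<open>F(yT) \<rightarrow> e\<^sup>-\<^sup>y\<close>. For a general
  initial law \<open>\<mu>\<close>, the chain has not hit \<open>A\<close> before time \<open>S - \<tau>\<close> with high probability and is
  mixed by time \<open>S\<close>, while \<open>S \<ll> E_\<nu>[H]\<close>.
\<close>

section \<open>Matrix exponentials\<close>

definition mat_abs_bound :: "'a set \<Rightarrow> ('a \<Rightarrow> 'a \<Rightarrow> real) \<Rightarrow> real" where
  "mat_abs_bound S Q = 1 + (\<Sum>u\<in>S. \<Sum>v\<in>S. \<bar>Q u v\<bar>)"

lemma one_le_mat_abs_bound: "finite S \<Longrightarrow> mat_abs_bound S Q \<ge> 1"
  unfolding mat_abs_bound_def by (auto intro!: sum_nonneg)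

lemma row_abs_sum_le_mat_abs_bound:
  assumes "finite S" "x \<in> S"
  shows "(\<Sum>z\<in>S. \<bar>Q x z\<bar>) \<le> mat_abs_bound S Q"
proof -
  have "(\<Sum>z\<in>S. \<bar>Q x z\<bar>) \<le> (\<Sum>u\<in>S. \<Sum>v\<in>S. \<bar>Q u v\<bar>)"
    using assms by (intro member_le_sum) (auto intro!: sum_nonneg)
  then show ?thesis unfolding mat_abs_bound_def by simp
qed

lemma abs_mpow_le:
  assumes "finite S" "x \<in> S" "y \<in> S"
  shows "\<bar>mpow S Q k x y\<bar> \<le> mat_abs_bound S Q ^ k"
  using assms(2)
proof (induction k arbitrary: x)
  case 0 then show ?case by simp
next
  case (Suc k)
  have "\<bar>mpow S Q (Suc k) x y\<bar> \<le> (\<Sum>z\<in>S. \<bar>Q x z\<bar> * \<bar>mpow S Q k z y\<bar>)"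
    unfolding mpow.simps by (rule order_trans[OF sum_abs]) (simp add: abs_mult)
  also have "\<dots> \<le> (\<Sum>z\<in>S. \<bar>Q x z\<bar> * mat_abs_bound S Q ^ k)"
    using Suc.IH by (intro sum_mono mult_left_mono) auto
  also have "\<dots> = (\<Sum>z\<in>S. \<bar>Q x z\<bar>) * mat_abs_bound S Q ^ k"
    by (simp add: sum_distrib_right)
  also have "\<dots> \<le> mat_abs_bound S Q * mat_abs_bound S Q ^ k"
  proof -
    have "0 \<le> mat_abs_bound S Q ^ k" using one_le_mat_abs_bound[OF assms(1), of Q] by simp
    then show ?thesis using row_abs_sum_le_mat_abs_bound[OF assms(1) Suc.prems] by (intro mult_right_mono) auto
  qed
  finally show ?case by simp
qed

lemma summable_mexp_abs:
  assumes "finite S" "x \<in> S" "y \<in> S"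
  shows "summable (\<lambda>k. \<bar>t ^ k / fact k * mpow S Q k x y\<bar>)"
proof -
  have b: "norm \<bar>t ^ n / fact n * mpow S Q n x y\<bar> \<le> inverse (fact n) * (\<bar>t\<bar> * mat_abs_bound S Q) ^ n" for n
  proof -
    have "\<bar>t ^ n / fact n * mpow S Q n x y\<bar> = inverse (fact n) * (\<bar>t\<bar> ^ n * \<bar>mpow S Q n x y\<bar>)"
      by (simp add: abs_mult power_abs divide_inverse)
    also have "\<dots> \<le> inverse (fact n) * (\<bar>t\<bar> ^ n * mat_abs_bound S Q ^ n)"
      using abs_mpow_le[OF assms, of Q n] by (intro mult_left_mono) auto
    also have "\<dots> = inverse (fact n) * (\<bar>t\<bar> * mat_abs_bound S Q) ^ n"
      by (simp only: power_mult_distrib)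
    finally show ?thesis by (simp only: real_norm_def abs_abs)
  qed
  show ?thesis
    by (rule summable_comparison_test'[OF summable_exp[of "\<bar>t\<bar> * mat_abs_bound S Q"] b])
qed

lemma summable_mexp:
  assumes "finite S" "x \<in> S" "y \<in> S"
  shows "summable (\<lambda>k. t ^ k / fact k * mpow S Q k x y)"
  by (rule summable_rabs_cancel[OF summable_mexp_abs[OF assms]])

lemma mexp_sums:
  assumes "finite S" "x \<in> S" "y \<in> S"
  shows "(\<lambda>k. t ^ k / fact k * mpow S Q k x y) sums mexp S Q t x y"
  unfolding mexp_def using summable_mexp[OF assms] by (simp add: summable_sums)

lemma mpow_add:
  assumes "finite S" "x \<in> S"
  shows "mpow S Q (i + j) x y = (\<Sum>z\<in>S. mpow S Q i x z * mpow S Q j z y)"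
  using assms(2)
proof (induction i arbitrary: x)
  case 0
  have "(\<Sum>z\<in>S. mpow S Q 0 x z * mpow S Q j z y) = (\<Sum>z\<in>S. if z = x then mpow S Q j x y else 0)"
    by (intro sum.cong) auto
  also have "\<dots> = mpow S Q j x y" using 0 assms(1) by simp
  finally show ?case by simp
next
  case (Suc i)
  have "mpow S Q (Suc i + j) x y = (\<Sum>w\<in>S. Q x w * (\<Sum>z\<in>S. mpow S Q i w z * mpow S Q j z y))"
    using Suc.IH by simp
  also have "\<dots> = (\<Sum>w\<in>S. \<Sum>z\<in>S. Q x w * mpow S Q i w z * mpow S Q j z y)"
    by (simp add: sum_distrib_left mult.assoc)
  also have "\<dots> = (\<Sum>z\<in>S. \<Sum>w\<in>S. Q x w * mpow S Q i w z * mpow S Q j z y)"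
    by (rule sum.swap)
  also have "\<dots> = (\<Sum>z\<in>S. mpow S Q (Suc i) x z * mpow S Q j z y)"
    by (simp add: sum_distrib_right)
  finally show ?case .
qed

lemma mexp_add:
  assumes S: "finite S" and x: "x \<in> S" and y: "y \<in> S"
  shows "mexp S Q (s + t) x y = (\<Sum>z\<in>S. mexp S Q s x z * mexp S Q t z y)"
proof -
  define a where "a z i = s ^ i / fact i * mpow S Q i x z" for z i
  define b where "b z i = t ^ i / fact i * mpow S Q i z y" for z i
  have cp: "(\<lambda>n. \<Sum>i\<le>n. a z i * b z (n - i)) sums (mexp S Q s x z * mexp S Q t z y)" if "z \<in> S" for z
  proof -
    have "(\<lambda>n. \<Sum>i\<le>n. a z i * b z (n - i)) sums ((\<Sum>k. a z k) * (\<Sum>k. b z k))"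
      using summable_mexp_abs[OF S x that] summable_mexp_abs[OF S that y]
      by (intro Cauchy_product_sums) (auto simp: a_def b_def)
    then show ?thesis by (simp add: a_def b_def mexp_def)
  qed
  have "(\<lambda>n. \<Sum>z\<in>S. \<Sum>i\<le>n. a z i * b z (n - i)) sums (\<Sum>z\<in>S. mexp S Q s x z * mexp S Q t z y)"
    by (rule sums_sum) (rule cp)
  moreover have "(\<Sum>z\<in>S. \<Sum>i\<le>n. a z i * b z (n - i)) = (s + t) ^ n / fact n * mpow S Q n x y" for n
  proof -
    have "(\<Sum>z\<in>S. \<Sum>i\<le>n. a z i * b z (n - i))
        = (\<Sum>i\<le>n. \<Sum>z\<in>S. a z i * b z (n - i))" by (rule sum.swap)
    also have "\<dots> = (\<Sum>i\<le>n. (s ^ i * t ^ (n - i) / (fact i * fact (n - i))) *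
                        (\<Sum>z\<in>S. mpow S Q i x z * mpow S Q (n - i) z y))"
      by (intro sum.cong refl) (simp add: a_def b_def sum_distrib_left mult_ac)
    also have "\<dots> = (\<Sum>i\<le>n. (s ^ i * t ^ (n - i) / (fact i * fact (n - i))) * mpow S Q n x y)"
      by (intro sum.cong refl) (simp add: mpow_add[OF S x, symmetric])
    also have "\<dots> = (\<Sum>i\<le>n. of_nat (n choose i) * s ^ i * t ^ (n - i)) / fact n * mpow S Q n x y"
    proof -
      have "s ^ i * t ^ (n - i) / (fact i * fact (n - i)) = of_nat (n choose i) * s ^ i * t ^ (n - i) / fact n"
        if "i \<le> n" for i
        using that by (simp add: binomial_fact field_simps)
      then show ?thesis
        by (simp add: sum_distrib_right sum_divide_distrib)
    qed
    also have "\<dots> = (s + t) ^ n / fact n * mpow S Q n x y"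
      by (simp add: binomial_ring)
    finally show ?thesis .
  qed
  ultimately have "(\<lambda>n. (s + t) ^ n / fact n * mpow S Q n x y) sums (\<Sum>z\<in>S. mexp S Q s x z * mexp S Q t z y)"
    by simp
  with mexp_sums[OF S x y, of "s + t" Q] show ?thesis
    using sums_unique2 by blast
qed

lemma binomial_sum_Suc_shift:
  fixes a :: "nat \<Rightarrow> real"
  shows "(\<Sum>i\<le>n. of_nat (n choose i) * c ^ (n - i) * a (Suc i)) + c * (\<Sum>i\<le>n. of_nat (n choose i) * c ^ (n - i) * a i)
       = (\<Sum>i\<le>Suc n. of_nat (Suc n choose i) * c ^ (Suc n - i) * a i)"
proof -
  have r1: "(\<Sum>i\<le>Suc n. of_nat (Suc n choose i) * c ^ (Suc n - i) * a i)
      = c ^ Suc n * a 0 + (\<Sum>i\<le>n. of_nat (Suc n choose Suc i) * c ^ (n - i) * a (Suc i))"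
    by (subst sum.atMost_Suc_shift) simp
  have r2: "(\<Sum>i\<le>n. of_nat (Suc n choose Suc i) * c ^ (n - i) * a (Suc i))
      = (\<Sum>i\<le>n. of_nat (n choose i) * c ^ (n - i) * a (Suc i)) + (\<Sum>i\<le>n. of_nat (n choose Suc i) * c ^ (n - i) * a (Suc i))"
    by (simp only: binomial_Suc_Suc of_nat_add distrib_right sum.distrib)
  have r3: "c ^ Suc n * a 0 + (\<Sum>i\<le>n. of_nat (n choose Suc i) * c ^ (n - i) * a (Suc i))
      = (\<Sum>i\<le>Suc n. of_nat (n choose i) * c ^ (Suc n - i) * a i)"
    by (subst sum.atMost_Suc_shift) simp
  have r4: "(\<Sum>i\<le>Suc n. of_nat (n choose i) * c ^ (Suc n - i) * a i) = (\<Sum>i\<le>n. of_nat (n choose i) * c ^ (Suc n - i) * a i)"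
    by (subst sum.atMost_Suc) simp
  have r5: "(\<Sum>i\<le>n. of_nat (n choose i) * c ^ (Suc n - i) * a i) = c * (\<Sum>i\<le>n. of_nat (n choose i) * c ^ (n - i) * a i)"
    unfolding sum_distrib_left
    by (intro sum.cong refl) (simp add: Suc_diff_le mult_ac)
  show ?thesis using r1 r2 r3 r4 r5 by simp
qed

lemma mpow_add_diagonal:
  assumes S: "finite S" and x: "x \<in> S"
  shows "mpow S (\<lambda>u v. Q u v + (if u = v then c else 0)) n x y
       = (\<Sum>i\<le>n. of_nat (n choose i) * c ^ (n - i) * mpow S Q i x y)"
  using x
proof (induction n arbitrary: x)
  case 0 then show ?case by simp
next
  case (Suc n)
  let ?Q' = "\<lambda>u v. Q u v + (if u = v then c else 0)"
  have "mpow S ?Q' (Suc n) x y = (\<Sum>z\<in>S. Q x z * mpow S ?Q' n z y) + (\<Sum>z\<in>S. (if x = z then c else 0) * mpow S ?Q' n z y)"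
    by (simp add: distrib_right sum.distrib)
  also have "(\<Sum>z\<in>S. (if x = z then c else 0) * mpow S ?Q' n z y) = c * mpow S ?Q' n x y"
  proof -
    have "(\<Sum>z\<in>S. (if x = z then c else 0) * mpow S ?Q' n z y) = (\<Sum>z\<in>S. if z = x then c * mpow S ?Q' n x y else 0)"
      by (intro sum.cong) auto
    then show ?thesis using S Suc.prems by simp
  qed
  also have "(\<Sum>z\<in>S. Q x z * mpow S ?Q' n z y) = (\<Sum>z\<in>S. Q x z * (\<Sum>i\<le>n. of_nat (n choose i) * c ^ (n - i) * mpow S Q i z y))"
    using Suc.IH by (intro sum.cong) auto
  also have "\<dots> = (\<Sum>i\<le>n. of_nat (n choose i) * c ^ (n - i) * mpow S Q (Suc i) x y)"
    by (simp add: sum_distrib_left sum_distrib_right sum.swap[of _ S] mult_ac)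
  finally show ?case using Suc.IH[OF Suc.prems] binomial_sum_Suc_shift[of n c "\<lambda>i. mpow S Q i x y"] by simp
qed

lemma mexp_add_diagonal:
  assumes S: "finite S" and x: "x \<in> S" and y: "y \<in> S"
  shows "mexp S (\<lambda>u v. Q u v + (if u = v then c else 0)) t x y = exp (c * t) * mexp S Q t x y"
proof -
  define a where "a j = t ^ j / fact j * mpow S Q j x y" for j
  define b where "b i = (c * t) ^ i / fact i" for i :: nat
  have sa: "summable (\<lambda>k. norm (a k))"
    using summable_mexp_abs[OF S x y] by (simp add: a_def)
  have sb: "summable (\<lambda>k. norm (b k))"
  proof -
    have "norm (b k) = inverse (fact k) * \<bar>c * t\<bar> ^ k" for k
      by (simp add: b_def abs_mult power_abs divide_inverse power_mult_distrib)
    then show ?thesis using summable_exp[of "\<bar>c * t\<bar>"] by simp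
  qed
  have eb: "(\<Sum>k. b k) = exp (c * t)"
  proof -
    have bb: "b = (\<lambda>n. inverse (fact n) * (c * t) ^ n)"
      by (simp add: b_def fun_eq_iff divide_inverse mult.commute)
    have "b sums exp (c * t)"
      unfolding bb using exp_converges[of "c * t"] by (simp add: divide_inverse mult.commute)
    then show ?thesis by (rule sums_unique[symmetric])
  qed
  have cp: "(\<lambda>n. \<Sum>j\<le>n. a j * b (n - j)) sums ((\<Sum>k. a k) * (\<Sum>k. b k))"
    by (rule Cauchy_product_sums[OF sa sb])
  have "(\<Sum>j\<le>n. a j * b (n - j)) = t ^ n / fact n * mpow S (\<lambda>u v. Q u v + (if u = v then c else 0)) n x y" for n
  proof -
    have "a j * b (n - j) = t ^ n / fact n * (of_nat (n choose j) * c ^ (n - j) * mpow S Q j x y)"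
      if "j \<le> n" for j
    proof -
      have tt: "t ^ j * t ^ (n - j) = t ^ n" using that by (simp add: power_add[symmetric])
      have "a j * b (n - j) = (t ^ j * t ^ (n - j)) * c ^ (n - j) * mpow S Q j x y / (fact j * fact (n - j))"
        by (simp add: a_def b_def power_mult_distrib)
      also have "\<dots> = t ^ n * c ^ (n - j) * mpow S Q j x y / (fact j * fact (n - j))" by (simp only: tt)
      also have "\<dots> = t ^ n / fact n * (of_nat (n choose j) * c ^ (n - j) * mpow S Q j x y)"
        using that by (simp add: binomial_fact field_simps)
      finally show ?thesis .
    qed
    then have "(\<Sum>j\<le>n. a j * b (n - j)) = (\<Sum>j\<le>n. t ^ n / fact n * (of_nat (n choose j) * c ^ (n - j) * mpow S Q j x y))"
      by (intro sum.cong) auto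
    also have "\<dots> = t ^ n / fact n * (\<Sum>j\<le>n. of_nat (n choose j) * c ^ (n - j) * mpow S Q j x y)"
      by (simp add: sum_distrib_left)
    finally show ?thesis by (simp only: mpow_add_diagonal[OF S x])
  qed
  with cp have "(\<lambda>n. t ^ n / fact n * mpow S (\<lambda>u v. Q u v + (if u = v then c else 0)) n x y) sums (mexp S Q t x y * exp (c * t))"
    by (simp add: eb a_def mexp_def)
  then show ?thesis
    using mexp_sums[OF S x y, of t "\<lambda>u v. Q u v + (if u = v then c else 0)"] sums_unique2 by (simp add: mult.commute)
qed

lemma mexp_0:
  assumes S: "finite S" and x: "x \<in> S" and y: "y \<in> S"
  shows "mexp S Q 0 x y = (if x = y then 1 else 0)"
proof -
  have eq: "(\<lambda>k. (0::real) ^ k / fact k * mpow S Q k x y) = (\<lambda>k. if k = 0 then mpow S Q k x y else 0)"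
    by auto
  have "(\<lambda>k. (0::real) ^ k / fact k * mpow S Q k x y) sums mpow S Q 0 x y"
    unfolding eq by (rule sums_single)
  then have "mexp S Q 0 x y = mpow S Q 0 x y" using mexp_sums[OF S x y, of 0 Q] sums_unique2 by blast
  then show ?thesis by simp
qed

lemma mpow_nonneg:
  assumes "\<And>u v. u \<in> S \<Longrightarrow> v \<in> S \<Longrightarrow> Q u v \<ge> 0" "x \<in> S" "y \<in> S"
  shows "mpow S Q k x y \<ge> 0"
  using assms(2)
proof (induction k arbitrary: x)
  case 0 then show ?case by simp
next
  case (Suc k) then show ?case using assms(1) by (auto intro!: sum_nonneg)
qed

lemma partial_sum_le_mexp:
  assumes S: "finite S" and Q: "\<And>u v. u \<in> S \<Longrightarrow> v \<in> S \<Longrightarrow> Q u v \<ge> 0"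
    and x: "x \<in> S" and y: "y \<in> S" and t: "t \<ge> 0" and that: "finite I"
  shows "(\<Sum>k\<in>I. t ^ k / fact k * mpow S Q k x y) \<le> mexp S Q t x y"
  unfolding mexp_def
  by (rule sum_le_suminf[OF summable_mexp[OF S x y] that])
     (use t mpow_nonneg[OF Q x y] in auto)

lemma mexp_nonneg:
  assumes S: "finite S" and Q: "\<And>u v. u \<in> S \<Longrightarrow> v \<in> S \<Longrightarrow> Q u v \<ge> 0"
    and x: "x \<in> S" and y: "y \<in> S" and t: "t \<ge> 0"
  shows "mexp S Q t x y \<ge> 0"
  using partial_sum_le_mexp[OF assms finite.emptyI] by simp

lemma mpow_mono_subset:
  assumes S: "finite S" and sub: "S' \<subseteq> S" and Q: "\<And>u v. u \<in> S \<Longrightarrow> v \<in> S \<Longrightarrow> Q u v \<ge> 0"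
    and x: "x \<in> S'" and y: "y \<in> S'"
  shows "mpow S' Q k x y \<le> mpow S Q k x y"
  using x
proof (induction k arbitrary: x)
  case 0 then show ?case by simp
next
  case (Suc k)
  have fS': "finite S'" using S sub finite_subset by blast
  have xS: "x \<in> S" using Suc.prems sub by blast
  have "mpow S' Q (Suc k) x y \<le> (\<Sum>z\<in>S'. Q x z * mpow S Q k z y)"
    unfolding mpow.simps
  proof (rule sum_mono)
    fix z assume z: "z \<in> S'"
    then have "Q x z \<ge> 0" using Q[OF xS] sub by blast
    then show "Q x z * mpow S' Q k z y \<le> Q x z * mpow S Q k z y"
      using Suc.IH[OF z] by (rule mult_left_mono[rotated])
  qed
  also have "\<dots> \<le> (\<Sum>z\<in>S. Q x z * mpow S Q k z y)"
    using sub Q Suc.prems y mpow_nonneg[of S Q _ y k] S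
    by (intro sum_mono2) (auto intro!: mult_nonneg_nonneg)
  finally show ?case by simp
qed

lemma mexp_mono_subset:
  assumes S: "finite S" and sub: "S' \<subseteq> S" and Q: "\<And>u v. u \<in> S \<Longrightarrow> v \<in> S \<Longrightarrow> Q u v \<ge> 0"
    and x: "x \<in> S'" and y: "y \<in> S'" and t: "t \<ge> 0"
  shows "mexp S' Q t x y \<le> mexp S Q t x y"
proof -
  have fS': "finite S'" using S sub finite_subset by blast
  have xS: "x \<in> S" "y \<in> S" using x y sub by auto
  have "t ^ k / fact k * mpow S' Q k x y \<le> t ^ k / fact k * mpow S Q k x y" for k
    using mpow_mono_subset[OF S sub Q x y, where k=k] t by (intro mult_left_mono) auto
  then show ?thesis unfolding mexp_def
    by (rule suminf_le[OF _ summable_mexp[OF fS' x y] summable_mexp[OF S xS]])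
qed

section \<open>Total variation distance\<close>

lemma tv_dist_test_function_bound:
  assumes fin: "finite \<Omega>" and eq: "(\<Sum>z\<in>\<Omega>. p z) = (\<Sum>z\<in>\<Omega>. q z)"
    and g: "\<And>z. z \<in> \<Omega> \<Longrightarrow> 0 \<le> g z \<and> g z \<le> 1"
  shows "\<bar>\<Sum>z\<in>\<Omega>. (p z - q z) * g z\<bar> \<le> tv_dist \<Omega> p q"
proof -
  have "(\<Sum>z\<in>\<Omega>. (p z - q z) * g z) = (\<Sum>z\<in>\<Omega>. (p z - q z) * (g z - 1/2)) + (1/2) * (\<Sum>z\<in>\<Omega>. (p z - q z))"
    by (simp add: sum_distrib_left sum.distrib[symmetric] algebra_simps)
  also have "(\<Sum>z\<in>\<Omega>. (p z - q z)) = 0" using eq by (simp add: sum_subtractf)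
  finally have e: "(\<Sum>z\<in>\<Omega>. (p z - q z) * g z) = (\<Sum>z\<in>\<Omega>. (p z - q z) * (g z - 1/2))" by simp
  have "\<bar>\<Sum>z\<in>\<Omega>. (p z - q z) * (g z - 1/2)\<bar> \<le> (\<Sum>z\<in>\<Omega>. \<bar>p z - q z\<bar> * \<bar>g z - 1/2\<bar>)"
    by (rule order_trans[OF sum_abs]) (simp add: abs_mult)
  also have "\<dots> \<le> (\<Sum>z\<in>\<Omega>. \<bar>p z - q z\<bar> * (1/2))"
  proof (rule sum_mono)
    fix z assume "z \<in> \<Omega>"
    then have "0 \<le> g z" "g z \<le> 1" using g by auto
    then have "\<bar>g z - 1/2\<bar> \<le> 1/2" unfolding abs_le_iff by linarith
    then show "\<bar>p z - q z\<bar> * \<bar>g z - 1/2\<bar> \<le> \<bar>p z - q z\<bar> * (1/2)"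
      by (rule mult_left_mono) simp
  qed
  also have "\<dots> = tv_dist \<Omega> p q" unfolding tv_dist_def by (simp add: sum_divide_distrib[symmetric])
  finally show ?thesis using e by simp
qed

lemma tv_dist_commute: "tv_dist \<Omega> p q = tv_dist \<Omega> q p"
  unfolding tv_dist_def by (simp add: abs_minus_commute)

lemma tv_dist_triangle: "tv_dist \<Omega> p q \<le> tv_dist \<Omega> p r + tv_dist \<Omega> r q"
proof -
  have "(\<Sum>x\<in>\<Omega>. \<bar>p x - q x\<bar>) \<le> (\<Sum>x\<in>\<Omega>. \<bar>p x - r x\<bar> + \<bar>r x - q x\<bar>)"
    by (intro sum_mono) simp
  then show ?thesis unfolding tv_dist_def by (simp add: sum.distrib)
qed

lemma zero_sum_parts:
  fixes lam :: "'a \<Rightarrow> real"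
  assumes fin: "finite \<Omega>" and s0: "(\<Sum>y\<in>\<Omega>. lam y) = 0"
  shows "(\<Sum>y\<in>\<Omega>. max (- lam y) 0) = (\<Sum>y\<in>\<Omega>. max (lam y) 0)"
    and "(\<Sum>y\<in>\<Omega>. \<bar>lam y\<bar>) = 2 * (\<Sum>y\<in>\<Omega>. max (lam y) 0)"
proof -
  have "(\<Sum>y\<in>\<Omega>. max (lam y) 0) - (\<Sum>y\<in>\<Omega>. max (- lam y) 0) = (\<Sum>y\<in>\<Omega>. lam y)"
    unfolding sum_subtractf[symmetric] by (intro sum.cong) auto
  then show neg: "(\<Sum>y\<in>\<Omega>. max (- lam y) 0) = (\<Sum>y\<in>\<Omega>. max (lam y) 0)" using s0 by simp
  have "(\<Sum>y\<in>\<Omega>. \<bar>lam y\<bar>) = (\<Sum>y\<in>\<Omega>. max (lam y) 0) + (\<Sum>y\<in>\<Omega>. max (- lam y) 0)"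
    unfolding sum.distrib[symmetric] by (intro sum.cong) auto
  then show "(\<Sum>y\<in>\<Omega>. \<bar>lam y\<bar>) = 2 * (\<Sum>y\<in>\<Omega>. max (lam y) 0)" using neg by simp
qed

lemma zero_sum_combination_eq:
  fixes lam f :: "'a \<Rightarrow> real"
  assumes fin: "finite \<Omega>" and s0: "(\<Sum>y\<in>\<Omega>. lam y) = 0"
  shows "(\<Sum>y\<in>\<Omega>. max (lam y) 0) * (\<Sum>y\<in>\<Omega>. lam y * f y)
       = (\<Sum>y\<in>\<Omega>. \<Sum>w\<in>\<Omega>. max (lam y) 0 * max (- lam w) 0 * (f y - f w))"
proof -
  define pp where "pp y = max (lam y) 0" for y
  define nn where "nn y = max (- lam y) 0" for y
  have lam: "lam y = pp y - nn y" for y unfolding pp_def nn_def by auto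
  have m: "(\<Sum>w\<in>\<Omega>. nn w) = (\<Sum>y\<in>\<Omega>. pp y)"
    using zero_sum_parts(1)[OF fin s0] by (simp add: pp_def nn_def)
  have "(\<Sum>y\<in>\<Omega>. \<Sum>w\<in>\<Omega>. pp y * nn w * (f y - f w))
      = (\<Sum>y\<in>\<Omega>. \<Sum>w\<in>\<Omega>. nn w * (pp y * f y)) - (\<Sum>y\<in>\<Omega>. \<Sum>w\<in>\<Omega>. pp y * (nn w * f w))"
    by (simp add: algebra_simps sum_subtractf)
  also have "(\<Sum>y\<in>\<Omega>. \<Sum>w\<in>\<Omega>. nn w * (pp y * f y)) = (\<Sum>w\<in>\<Omega>. nn w) * (\<Sum>y\<in>\<Omega>. pp y * f y)"
    by (simp add: sum_distrib_right[symmetric] sum_distrib_left)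
  also have "(\<Sum>y\<in>\<Omega>. \<Sum>w\<in>\<Omega>. pp y * (nn w * f w)) = (\<Sum>y\<in>\<Omega>. pp y) * (\<Sum>w\<in>\<Omega>. nn w * f w)"
    by (simp add: sum_distrib_left[symmetric] sum_distrib_right[symmetric])
  also have "(\<Sum>w\<in>\<Omega>. nn w) * (\<Sum>y\<in>\<Omega>. pp y * f y) - (\<Sum>y\<in>\<Omega>. pp y) * (\<Sum>w\<in>\<Omega>. nn w * f w)
      = (\<Sum>y\<in>\<Omega>. pp y) * ((\<Sum>y\<in>\<Omega>. pp y * f y) - (\<Sum>y\<in>\<Omega>. nn y * f y))"
    unfolding m by (simp add: right_diff_distrib)
  also have "(\<Sum>y\<in>\<Omega>. pp y * f y) - (\<Sum>y\<in>\<Omega>. nn y * f y) = (\<Sum>y\<in>\<Omega>. lam y * f y)"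
    unfolding sum_subtractf[symmetric] lam by (simp add: left_diff_distrib)
  finally show ?thesis by (simp add: pp_def nn_def)
qed

lemma dobrushin_contraction:
  fixes lam :: "'a \<Rightarrow> real" and Pm :: "'a \<Rightarrow> 'a \<Rightarrow> real"
  assumes fin: "finite \<Omega>" and s0: "(\<Sum>y\<in>\<Omega>. lam y) = 0"
    and th: "\<And>x y. x \<in> \<Omega> \<Longrightarrow> y \<in> \<Omega> \<Longrightarrow> tv_dist \<Omega> (Pm x) (Pm y) \<le> \<theta>"
  shows "(\<Sum>z\<in>\<Omega>. \<bar>\<Sum>y\<in>\<Omega>. lam y * Pm y z\<bar>) \<le> \<theta> * (\<Sum>y\<in>\<Omega>. \<bar>lam y\<bar>)"
proof -
  define pp where "pp y = max (lam y) 0" for y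
  define nn where "nn y = max (- lam y) 0" for y
  define m where "m = (\<Sum>y\<in>\<Omega>. pp y)"
  have pp0: "0 \<le> pp y" and nn0: "0 \<le> nn y" for y by (simp_all add: pp_def nn_def)
  then have pn0: "0 \<le> pp y * nn w" for y w by simp
  have m0: "m \<ge> 0" unfolding m_def pp_def by (auto intro!: sum_nonneg)
  have abs_lam: "(\<Sum>y\<in>\<Omega>. \<bar>lam y\<bar>) = 2 * m"
    using zero_sum_parts(2)[OF fin s0] by (simp add: m_def pp_def)
  have "m * (\<Sum>z\<in>\<Omega>. \<bar>\<Sum>y\<in>\<Omega>. lam y * Pm y z\<bar>) = (\<Sum>z\<in>\<Omega>. \<bar>m * (\<Sum>y\<in>\<Omega>. lam y * Pm y z)\<bar>)"
    by (subst sum_distrib_left) (simp add: abs_mult m0)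
  also have "\<dots> = (\<Sum>z\<in>\<Omega>. \<bar>\<Sum>y\<in>\<Omega>. \<Sum>w\<in>\<Omega>. pp y * nn w * (Pm y z - Pm w z)\<bar>)"
    using zero_sum_combination_eq[OF fin s0] by (simp add: m_def pp_def nn_def)
  also have "\<dots> \<le> (\<Sum>z\<in>\<Omega>. \<Sum>y\<in>\<Omega>. \<Sum>w\<in>\<Omega>. pp y * nn w * \<bar>Pm y z - Pm w z\<bar>)"
    by (intro sum_mono order_trans[OF sum_abs] order_trans[OF sum_abs]) (simp add: abs_mult abs_of_nonneg pp0 nn0)
  also have "\<dots> = (\<Sum>y\<in>\<Omega>. \<Sum>z\<in>\<Omega>. \<Sum>w\<in>\<Omega>. pp y * nn w * \<bar>Pm y z - Pm w z\<bar>)"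
    by (rule sum.swap)
  also have "\<dots> = (\<Sum>y\<in>\<Omega>. \<Sum>w\<in>\<Omega>. \<Sum>z\<in>\<Omega>. pp y * nn w * \<bar>Pm y z - Pm w z\<bar>)"
    by (intro sum.cong refl sum.swap)
  also have "\<dots> = (\<Sum>y\<in>\<Omega>. \<Sum>w\<in>\<Omega>. pp y * nn w * (\<Sum>z\<in>\<Omega>. \<bar>Pm y z - Pm w z\<bar>))"
    by (simp add: sum_distrib_left)
  also have "\<dots> \<le> (\<Sum>y\<in>\<Omega>. \<Sum>w\<in>\<Omega>. pp y * nn w * (2 * \<theta>))"
    using th pn0 by (intro sum_mono mult_left_mono) (auto simp: tv_dist_def mult.commute)
  also have "\<dots> = 2 * \<theta> * (\<Sum>y\<in>\<Omega>. pp y) * (\<Sum>w\<in>\<Omega>. nn w)"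
    by (simp add: sum_distrib_left[symmetric] sum_distrib_right[symmetric] mult_ac)
  also have "\<dots> = m * (\<theta> * (\<Sum>y\<in>\<Omega>. \<bar>lam y\<bar>))"
    using zero_sum_parts(1)[OF fin s0] abs_lam by (simp add: m_def pp_def nn_def)
  finally have le: "m * (\<Sum>z\<in>\<Omega>. \<bar>\<Sum>y\<in>\<Omega>. lam y * Pm y z\<bar>) \<le> m * (\<theta> * (\<Sum>y\<in>\<Omega>. \<bar>lam y\<bar>))" .
  show ?thesis
  proof (cases "m = 0")
    case True
    then have "(\<Sum>y\<in>\<Omega>. \<bar>lam y\<bar>) = 0" using abs_lam by simp
    then have "\<forall>y\<in>\<Omega>. lam y = 0" using fin by (simp add: sum_nonneg_eq_0_iff)
    then show ?thesis by simp
  next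
    case False
    then show ?thesis using le m0 by simp
  qed
qed

section \<open>Integrals of nonincreasing functions\<close>

lemma antimono_on_integrable_on:
  fixes f :: "real \<Rightarrow> real"
  assumes "antimono_on {0..} f" and "0 \<le> a"
  shows "f integrable_on {a..b}"
proof -
  have "mono_on {a..b} (\<lambda>x. - f x)"
  proof (intro monotone_onI)
    fix x y assume "x \<in> {a..b}" "y \<in> {a..b}" "x \<le> y"
    then show "- f x \<le> - f y" using monotone_onD[OF assms(1), of x y] assms(2) by simp
  qed
  then have "(\<lambda>x. - (- f x)) integrable_on {a..b}"
    by (intro integrable_neg integrable_on_mono_on)
  then show ?thesis by simp
qed

lemma integral_antimono_on_interval_bounds:
  fixes f :: "real \<Rightarrow> real"
  assumes d: "antimono_on {0..} f" and a: "0 \<le> a" and h: "0 \<le> h"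
  shows "integral {a..a + h} f \<le> h * f a" and "h * f (a + h) \<le> integral {a..a + h} f"
proof -
  have i: "f integrable_on {a..a + h}" using antimono_on_integrable_on[OF d a] .
  have "integral {a..a + h} f \<le> integral {a..a + h} (\<lambda>x. f a)"
    by (rule integral_le[OF i]) (use a in \<open>auto intro!: monotone_onD[OF d]\<close>)
  then show "integral {a..a + h} f \<le> h * f a" using h by simp
  have "integral {a..a + h} (\<lambda>x. f (a + h)) \<le> integral {a..a + h} f"
    by (rule integral_le[OF _ i]) (use a in \<open>auto intro!: monotone_onD[OF d]\<close>)
  then show "h * f (a + h) \<le> integral {a..a + h} f" using h by simp
qed

lemma integral_antimono_on_Riemann_bounds:
  fixes f :: "real \<Rightarrow> real"
  assumes d: "antimono_on {0..} f" and h: "0 \<le> h"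
  shows "integral {0..real M * h} f \<le> h * (\<Sum>n<M. f (real n * h))"
    and "h * (\<Sum>n<M. f (real (Suc n) * h)) \<le> integral {0..real M * h} f"
proof (induction M)
  case 0
  { case 1 show ?case by simp }
  { case 2 show ?case by simp }
next
  case (Suc M)
  have split: "integral {0..real M * h + h} f
      = integral {0..real M * h} f + integral {real M * h..real M * h + h} f"
    using Henstock_Kurzweil_Integration.integral_combine[where a=0 and c="real M * h" and b="real M * h + h" and f=f] h
      antimono_on_integrable_on[OF d, of 0 "real M * h + h"]
    by simp
  have eq: "real (Suc M) * h = real M * h + h" by (simp add: algebra_simps)
  note piece = integral_antimono_on_interval_bounds[OF d _ h, of "real M * h"]
  { case 1 show ?case using Suc.IH(1) piece h unfolding eq split by (simp add: distrib_left) }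
  { case 2 show ?case using Suc.IH(2) piece h unfolding eq split by (simp add: distrib_left algebra_simps) }
qed

lemma antimono_on_nonneg_integrable_on_halfline:
  fixes f :: "real \<Rightarrow> real"
  assumes d: "antimono_on {0..} f" and nn: "\<And>t. t \<ge> 0 \<Longrightarrow> f t \<ge> 0"
    and C: "\<And>k::nat. integral {0..real k} f \<le> C"
  shows "f integrable_on {0..}" and "integral {0..} f \<le> C"
proof -
  define g where "g k x = (if x \<in> {0..real k} then f x else 0)" for k :: nat and x
  have gint: "integral {0..} (g k) = integral {0..real k} f" for k
    unfolding g_def integral_restrict_Int by (simp add: Int_absorb2 Int_commute)
  have mc: "f integrable_on {0..} \<and> (\<lambda>k. integral {0..} (g k)) \<longlonglongrightarrow> integral {0..} f"
  proof (rule monotone_convergence_increasing)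
    show "g k integrable_on {0..}" for k
    proof -
      have "g k integrable_on {0..real k}"
        by (rule integrable_eq[OF antimono_on_integrable_on[OF d, of 0]]) (auto simp: g_def)
      then show ?thesis by (rule integrable_on_superset) (auto simp: g_def)
    qed
    show "g k x \<le> g (Suc k) x" if "x \<in> {0..}" for k x using that nn by (auto simp: g_def)
    show "(\<lambda>k. g k x) \<longlonglongrightarrow> f x" if "x \<in> {0..}" for x
    proof (rule tendsto_eventually)
      obtain n :: nat where "x \<le> real n" using real_arch_simple by blast
      then show "eventually (\<lambda>k. g k x = f x) sequentially"
        using that by (auto simp: g_def eventually_sequentially intro!: exI[of _ n])
    qed
    have "\<bar>integral {0..} (g k)\<bar> \<le> \<bar>C\<bar>" for k
    proof -
      have "integral {0..real k} f \<ge> 0"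
        by (rule integral_nonneg[OF antimono_on_integrable_on[OF d, of 0]]) (auto intro: nn)
      then show ?thesis using C[of k] gint[of k] by simp
    qed
    then show "bounded (range (\<lambda>k. integral {0..} (g k)))"
      by (intro boundedI[of _ "\<bar>C\<bar>"]) auto
  qed
  then show "f integrable_on {0..}" by blast
  show "integral {0..} f \<le> C"
    using mc C gint by (intro LIMSEQ_le_const2[of "\<lambda>k. integral {0..} (g k)"]) auto
qed

lemma integral_le_integral_halfline:
  fixes f :: "real \<Rightarrow> real"
  assumes d: "antimono_on {0..} f" and nn: "\<And>t. t \<ge> 0 \<Longrightarrow> f t \<ge> 0"
    and fi: "f integrable_on {0..}" and b: "0 \<le> b"
  shows "integral {0..b} f \<le> integral {0..} f"
  by (rule integral_subset_le[OF _ antimono_on_integrable_on[OF d order_refl] fi]) (use nn b in auto)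

section \<open>Hitting times of a finite chain\<close>

locale finite_chain =
  fixes \<Omega> :: "'a set" and R :: "'a \<Rightarrow> 'a \<Rightarrow> real" and \<nu> :: "'a \<Rightarrow> real" and A :: "'a set"
  assumes fin: "finite \<Omega>"
    and rates: "\<And>x y. x \<in> \<Omega> \<Longrightarrow> y \<in> \<Omega> \<Longrightarrow> x \<noteq> y \<Longrightarrow> R x y \<ge> 0"
    and irr: "irreducible \<Omega> R"
    and stat: "stationary \<Omega> R \<nu>"
    and A_sub: "A \<subseteq> \<Omega>" and A_ne: "A \<noteq> {}"
begin

abbreviation "L \<equiv> gen \<Omega> R"
abbreviation "B \<equiv> \<Omega> - A"
definition "exit_bound = (\<Sum>u\<in>\<Omega>. \<Sum>v\<in>\<Omega> - {u}. R u v)"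
text \<open>Uniformization: shifting the generator by \<open>exit_bound\<close> on the diagonal gives an entrywise
  nonnegative matrix \<open>U\<close> with \<open>exp (t L) = exp (- exit_bound t) exp (t U)\<close>, whence positivity and
  comparison results for the semigroups.\<close>
definition "U u v = L u v + (if u = v then exit_bound else 0)"
abbreviation "P t x y \<equiv> trans_prob \<Omega> R t x y"
abbreviation "K t x y \<equiv> mexp B L t x y"
definition "\<rho> x = (\<Sum>z\<in>A. R x z)"

lemma finite_B: "finite B" using fin by simp
lemma B_subset: "B \<subseteq> \<Omega>" by blast

lemma exit_rate_le_exit_bound: "u \<in> \<Omega> \<Longrightarrow> (\<Sum>v\<in>\<Omega> - {u}. R u v) \<le> exit_bound"
  unfolding exit_bound_def using fin rates by (intro member_le_sum) (auto intro!: sum_nonneg)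

lemma exit_bound_nonneg: "exit_bound \<ge> 0"
  unfolding exit_bound_def using fin rates by (auto intro!: sum_nonneg)

lemma U_nonneg: "u \<in> \<Omega> \<Longrightarrow> v \<in> \<Omega> \<Longrightarrow> U u v \<ge> 0"
  using exit_rate_le_exit_bound[of u] rates[of u v] by (auto simp: U_def gen_def)

lemma P_eq_uniformized: assumes "x \<in> \<Omega>" "y \<in> \<Omega>" shows "P t x y = exp (- (exit_bound * t)) * mexp \<Omega> U t x y"
  using mexp_add_diagonal[OF fin assms, where Q=L and c=exit_bound and t=t]
  by (simp add: trans_prob_def U_def[abs_def] exp_minus field_simps)

lemma K_eq_uniformized: assumes "x \<in> B" "y \<in> B" shows "K t x y = exp (- (exit_bound * t)) * mexp B U t x y"
  using mexp_add_diagonal[OF finite_B assms, where Q=L and c=exit_bound and t=t]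
  by (simp add: U_def[abs_def] exp_minus field_simps)

lemma P_nonneg: "x \<in> \<Omega> \<Longrightarrow> y \<in> \<Omega> \<Longrightarrow> t \<ge> 0 \<Longrightarrow> P t x y \<ge> 0"
  using mexp_nonneg[OF fin U_nonneg, where x=x and y=y and t=t] by (simp add: P_eq_uniformized)

lemma K_nonneg: "x \<in> B \<Longrightarrow> y \<in> B \<Longrightarrow> t \<ge> 0 \<Longrightarrow> K t x y \<ge> 0"
  using mexp_nonneg[OF finite_B, where Q=U and x=x and y=y and t=t] U_nonneg by (simp add: K_eq_uniformized)

lemma K_le_P: "x \<in> B \<Longrightarrow> y \<in> B \<Longrightarrow> t \<ge> 0 \<Longrightarrow> K t x y \<le> P t x y"
  using mexp_mono_subset[OF fin B_subset U_nonneg, where x=x and y=y and t=t] by (simp add: K_eq_uniformized P_eq_uniformized)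

lemma gen_row_sum: "x \<in> \<Omega> \<Longrightarrow> (\<Sum>y\<in>\<Omega>. L x y) = 0"
proof -
  assume x: "x \<in> \<Omega>"
  have "(\<Sum>y\<in>\<Omega>. L x y) = L x x + (\<Sum>y\<in>\<Omega> - {x}. L x y)"
    using x fin by (simp add: sum.remove)
  also have "(\<Sum>y\<in>\<Omega> - {x}. L x y) = (\<Sum>y\<in>\<Omega> - {x}. R x y)"
    by (intro sum.cong) (auto simp: gen_def)
  finally show ?thesis by (simp add: gen_def)
qed

lemma mpow_gen_row_sum: "x \<in> \<Omega> \<Longrightarrow> (\<Sum>y\<in>\<Omega>. mpow \<Omega> L k x y) = (if k = 0 then 1 else 0)"
proof (induction k arbitrary: x)
  case 0 then show ?case using fin by simp
next
  case (Suc k)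
  have "(\<Sum>y\<in>\<Omega>. mpow \<Omega> L (Suc k) x y) = (\<Sum>z\<in>\<Omega>. L x z * (\<Sum>y\<in>\<Omega>. mpow \<Omega> L k z y))"
    by (simp add: sum_distrib_left) (rule sum.swap)
  also have "\<dots> = (\<Sum>z\<in>\<Omega>. L x z * (if k = 0 then 1 else 0))"
    using Suc.IH by (intro sum.cong) auto
  also have "\<dots> = 0" using gen_row_sum[OF Suc.prems] by (cases "k = 0") auto
  finally show ?case by simp
qed

lemma P_row_sum: "x \<in> \<Omega> \<Longrightarrow> (\<Sum>y\<in>\<Omega>. P t x y) = 1"
proof -
  assume x: "x \<in> \<Omega>"
  have s: "(\<lambda>k. \<Sum>y\<in>\<Omega>. t ^ k / fact k * mpow \<Omega> L k x y) sums (\<Sum>y\<in>\<Omega>. mexp \<Omega> L t x y)"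
    by (rule sums_sum) (rule mexp_sums[OF fin x])
  have eq: "(\<lambda>k. \<Sum>y\<in>\<Omega>. t ^ k / fact k * mpow \<Omega> L k x y) = (\<lambda>k. if k = 0 then 1 else 0)"
  proof
    fix k
    show "(\<Sum>y\<in>\<Omega>. t ^ k / fact k * mpow \<Omega> L k x y) = (if k = 0 then 1 else 0)"
    proof -
      have "(\<Sum>y\<in>\<Omega>. t ^ k / fact k * mpow \<Omega> L k x y) = t ^ k / fact k * (\<Sum>y\<in>\<Omega>. mpow \<Omega> L k x y)"
        by (rule sum_distrib_left[symmetric])
      then show ?thesis using mpow_gen_row_sum[OF x, of k] by simp
    qed
  qed
  have "(\<lambda>k::nat. if k = 0 then (1::real) else 0) sums 1"
    using sums_single[of 0 "\<lambda>_. (1::real)"] by simp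
  with s eq show ?thesis unfolding trans_prob_def using sums_unique2 by metis
qed

lemma stationary_gen: "y \<in> \<Omega> \<Longrightarrow> (\<Sum>x\<in>\<Omega>. \<nu> x * L x y) = 0"
  using stat by (simp add: stationary_def)

lemma prob_on_nu: "prob_on \<Omega> \<nu>" using stat by (simp add: stationary_def)

lemma P_stationary: "y \<in> \<Omega> \<Longrightarrow> (\<Sum>x\<in>\<Omega>. \<nu> x * P t x y) = \<nu> y"
proof -
  assume y: "y \<in> \<Omega>"
  have s: "(\<lambda>k. \<Sum>x\<in>\<Omega>. \<nu> x * (t ^ k / fact k * mpow \<Omega> L k x y)) sums (\<Sum>x\<in>\<Omega>. \<nu> x * mexp \<Omega> L t x y)"
    by (rule sums_sum) (rule sums_mult, rule mexp_sums[OF fin _ y])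
  have eq: "(\<lambda>k. \<Sum>x\<in>\<Omega>. \<nu> x * (t ^ k / fact k * mpow \<Omega> L k x y)) = (\<lambda>k. if k = 0 then \<nu> y else 0)"
  proof
    fix k
    show "(\<Sum>x\<in>\<Omega>. \<nu> x * (t ^ k / fact k * mpow \<Omega> L k x y)) = (if k = 0 then \<nu> y else 0)"
    proof (cases k)
      case 0
      have "(\<Sum>x\<in>\<Omega>. \<nu> x * (t ^ k / fact k * mpow \<Omega> L k x y)) = (\<Sum>x\<in>\<Omega>. if x = y then \<nu> y else 0)"
        using 0 by (intro sum.cong) auto
      then show ?thesis using 0 y fin by simp
    next
      case (Suc j)
      have "(\<Sum>x\<in>\<Omega>. \<nu> x * mpow \<Omega> L k x y) = (\<Sum>x\<in>\<Omega>. \<Sum>z\<in>\<Omega>. \<nu> x * L x z * mpow \<Omega> L j z y)"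
        using Suc by (simp add: sum_distrib_left mult.assoc)
      also have "\<dots> = (\<Sum>z\<in>\<Omega>. \<Sum>x\<in>\<Omega>. \<nu> x * L x z * mpow \<Omega> L j z y)"
        by (rule sum.swap)
      also have "\<dots> = (\<Sum>z\<in>\<Omega>. (\<Sum>x\<in>\<Omega>. \<nu> x * L x z) * mpow \<Omega> L j z y)"
        by (simp add: sum_distrib_right)
      also have "\<dots> = 0" using stationary_gen by simp
      finally have "(\<Sum>x\<in>\<Omega>. \<nu> x * mpow \<Omega> L k x y) = 0" .
      moreover have "(\<Sum>x\<in>\<Omega>. \<nu> x * (t ^ k / fact k * mpow \<Omega> L k x y)) = t ^ k / fact k * (\<Sum>x\<in>\<Omega>. \<nu> x * mpow \<Omega> L k x y)"
        by (simp add: sum_distrib_left mult_ac)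
      ultimately have "(\<Sum>x\<in>\<Omega>. \<nu> x * (t ^ k / fact k * mpow \<Omega> L k x y)) = t ^ k / fact k * 0"
        by simp
      then show ?thesis using Suc by simp
    qed
  qed
  have "(\<lambda>k::nat. if k = 0 then \<nu> y else 0) sums \<nu> y"
    using sums_single[of 0 "\<lambda>_. \<nu> y"] by simp
  with s eq show ?thesis unfolding trans_prob_def using sums_unique2 by metis
qed

lemma P_semigroup: "x \<in> \<Omega> \<Longrightarrow> y \<in> \<Omega> \<Longrightarrow> P (s + t) x y = (\<Sum>z\<in>\<Omega>. P s x z * P t z y)"
  unfolding trans_prob_def by (rule mexp_add[OF fin])

lemma K_semigroup: "x \<in> B \<Longrightarrow> y \<in> B \<Longrightarrow> K (s + t) x y = (\<Sum>z\<in>B. K s x z * K t z y)"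
  by (rule mexp_add[OF finite_B])

lemma K_0: "x \<in> B \<Longrightarrow> y \<in> B \<Longrightarrow> K 0 x y = (if x = y then 1 else 0)"
  by (rule mexp_0[OF finite_B])

abbreviation "sv x t \<equiv> surv \<Omega> R A x t"

lemma surv_eq_K_row_sum: "x \<in> B \<Longrightarrow> t \<ge> 0 \<Longrightarrow> sv x t = (\<Sum>y\<in>B. K t x y)"
  by (simp add: surv_def)

lemma surv_in_A: "x \<in> A \<Longrightarrow> t \<ge> 0 \<Longrightarrow> sv x t = 0"
  by (simp add: surv_def)

lemma surv_nonneg: "x \<in> \<Omega> \<Longrightarrow> sv x t \<ge> 0"
  unfolding surv_def using K_nonneg by (auto intro!: sum_nonneg)

lemma K_row_sum_le: assumes x: "x \<in> B" and t: "t \<ge> 0"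
  shows "(\<Sum>y\<in>B. K t x y) \<le> 1 - (\<Sum>a\<in>A. P t x a)"
proof -
  have xO: "x \<in> \<Omega>" using x by blast
  have "(\<Sum>y\<in>B. K t x y) \<le> (\<Sum>y\<in>B. P t x y)"
    using K_le_P x t by (intro sum_mono) auto
  moreover have "(\<Sum>y\<in>B. P t x y) + (\<Sum>a\<in>A. P t x a) = 1"
    using P_row_sum[OF xO, of t] sum.subset_diff[OF A_sub fin, of "P t x"] by simp
  ultimately show ?thesis by simp
qed

lemma surv_le_1: "x \<in> \<Omega> \<Longrightarrow> sv x t \<le> 1"
proof -
  assume x: "x \<in> \<Omega>"
  show ?thesis
  proof (cases "t < 0 \<or> x \<in> A")
    case True then show ?thesis by (auto simp: surv_def)
  next
    case False
    then have xB: "x \<in> B" and t: "t \<ge> 0" using x by auto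
    have "(\<Sum>a\<in>A. P t x a) \<ge> 0" using P_nonneg t x A_sub by (auto intro!: sum_nonneg)
    then show ?thesis using K_row_sum_le[OF xB t] surv_eq_K_row_sum[OF xB t] by simp
  qed
qed

lemma surv_Markov: assumes x: "x \<in> B" and t: "t \<ge> 0" and s: "s \<ge> 0"
  shows "sv x (t + s) = (\<Sum>y\<in>B. K t x y * sv y s)"
proof -
  have "sv x (t + s) = (\<Sum>w\<in>B. \<Sum>y\<in>B. K t x y * K s y w)"
    using surv_eq_K_row_sum[OF x] t s K_semigroup[OF x] by simp
  also have "\<dots> = (\<Sum>y\<in>B. \<Sum>w\<in>B. K t x y * K s y w)" by (rule sum.swap)
  also have "\<dots> = (\<Sum>y\<in>B. K t x y * sv y s)"
    using surv_eq_K_row_sum s by (simp add: sum_distrib_left)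
  finally show ?thesis .
qed

lemma surv_0: "x \<in> B \<Longrightarrow> sv x 0 = 1"
proof -
  assume x: "x \<in> B"
  have "sv x 0 = (\<Sum>y\<in>B. if y = x then 1 else 0)"
    using surv_eq_K_row_sum[OF x, of 0] K_0[OF x] by (auto intro!: sum.cong)
  then show ?thesis using x finite_B by simp
qed

lemma surv_antimono: assumes x: "x \<in> \<Omega>" and t: "0 \<le> t" and tt: "t \<le> t'"
  shows "sv x t' \<le> sv x t"
proof (cases "x \<in> A")
  case True then show ?thesis using t tt by (simp add: surv_in_A)
next
  case False
  then have xB: "x \<in> B" using x by blast
  have "sv x t' = (\<Sum>y\<in>B. K t x y * sv y (t' - t))" using surv_Markov[OF xB t, of "t' - t"] tt by simp
  also have "\<dots> \<le> (\<Sum>y\<in>B. K t x y * 1)"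
    using K_nonneg[OF xB _ t] surv_le_1 by (intro sum_mono mult_left_mono) auto
  also have "\<dots> = sv x t" using surv_eq_K_row_sum[OF xB t] by simp
  finally show ?thesis .
qed

lemma rho_nonneg: "x \<in> B \<Longrightarrow> \<rho> x \<ge> 0"
  unfolding \<rho>_def using rates A_sub by (auto intro!: sum_nonneg)

lemma gen_row_sum_outside_A: assumes x: "x \<in> B" shows "(\<Sum>y\<in>B. L x y) = - \<rho> x"
proof -
  have xO: "x \<in> \<Omega>" and xA: "x \<notin> A" using x by auto
  have "(\<Sum>y\<in>B. L x y) = L x x + (\<Sum>y\<in>B - {x}. L x y)"
    using x finite_B by (simp add: sum.remove)
  also have "(\<Sum>y\<in>B - {x}. L x y) = (\<Sum>y\<in>B - {x}. R x y)"
    by (intro sum.cong) (auto simp: gen_def)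
  also have "(\<Sum>z\<in>\<Omega> - {x}. R x z) = (\<Sum>y\<in>B - {x}. R x y) + \<rho> x"
  proof -
    have "\<Omega> - {x} = (B - {x}) \<union> A" using A_sub xA by blast
    moreover have "(B - {x}) \<inter> A = {}" by blast
    ultimately show ?thesis unfolding \<rho>_def using fin A_sub finite_subset[OF A_sub fin]
      by (simp add: sum.union_disjoint)
  qed
  then have "L x x = - (\<Sum>y\<in>B - {x}. R x y) - \<rho> x" by (simp add: gen_def)
  finally show ?thesis by simp
qed

lemma surv_short_time_ge: assumes x: "x \<in> B" and h: "h \<ge> 0"
  shows "sv x h \<ge> 1 - h * \<rho> x - exit_bound\<^sup>2 * h\<^sup>2"
proof -
  have U0: "\<And>u v. u \<in> B \<Longrightarrow> v \<in> B \<Longrightarrow> U u v \<ge> 0" using U_nonneg by auto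
  have trm: "(if x = y then 1 else 0) + h * U x y \<le> mexp B U h x y" if y: "y \<in> B" for y
  proof -
    have m1: "mpow B U 1 x y = U x y"
    proof -
      have "mpow B U 1 x y = (\<Sum>z\<in>B. if z = y then U x y else 0)"
        unfolding One_nat_def mpow.simps by (intro sum.cong) auto
      then show ?thesis using y finite_B by simp
    qed
    have "(\<Sum>k\<in>{0,1::nat}. h ^ k / fact k * mpow B U k x y) \<le> mexp B U h x y"
      by (rule partial_sum_le_mexp) (use finite_B U0 x y h in auto)
    then show ?thesis using m1 by simp
  qed
  have "(\<Sum>y\<in>B. (if x = y then 1 else 0) + h * U x y) = 1 + h * (\<Sum>y\<in>B. U x y)"
    using x finite_B by (simp add: sum.distrib sum_distrib_left)
  also have "(\<Sum>y\<in>B. U x y) = exit_bound - \<rho> x"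
  proof -
    have "(\<Sum>y\<in>B. U x y) = (\<Sum>y\<in>B. L x y) + (\<Sum>y\<in>B. if x = y then exit_bound else 0)"
      unfolding U_def by (simp add: sum.distrib)
    also have "(\<Sum>y\<in>B. if x = y then exit_bound else 0) = exit_bound" using x finite_B by simp
    finally show ?thesis using gen_row_sum_outside_A[OF x] by simp
  qed
  finally have s1: "1 + h * (exit_bound - \<rho> x) \<le> (\<Sum>y\<in>B. mexp B U h x y)"
    using trm by (metis (no_types, lifting) sum_mono)
  have "sv x h = exp (- (exit_bound * h)) * (\<Sum>y\<in>B. mexp B U h x y)"
    using surv_eq_K_row_sum[OF x h] K_eq_uniformized[OF x] by (simp add: sum_distrib_left)
  also have "\<dots> \<ge> exp (- (exit_bound * h)) * (1 + h * (exit_bound - \<rho> x))"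
    using s1 by (intro mult_left_mono) auto
  finally have s2: "sv x h \<ge> exp (- (exit_bound * h)) * (1 + exit_bound * h) - exp (- (exit_bound * h)) * (h * \<rho> x)"
    by (simp add: algebra_simps)
  have e1: "exp (- (exit_bound * h)) \<ge> 1 - exit_bound * h" using exp_ge_add_one_self[of "- (exit_bound * h)"] by simp
  have e2: "exp (- (exit_bound * h)) \<le> 1" using exit_bound_nonneg h by simp
  have hr: "h * \<rho> x \<ge> 0" using rho_nonneg[OF x] h by simp
  have ch: "1 + exit_bound * h \<ge> 0" using exit_bound_nonneg h by simp
  have "exp (- (exit_bound * h)) * (1 + exit_bound * h) \<ge> (1 - exit_bound * h) * (1 + exit_bound * h)"
    using e1 ch by (rule mult_right_mono)
  moreover have "exp (- (exit_bound * h)) * (h * \<rho> x) \<le> h * \<rho> x"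
    using e2 hr by (simp add: mult_left_le_one_le)
  ultimately show ?thesis using s2 by (simp add: power2_eq_square algebra_simps)
qed

lemma mpow_U_pos_of_path:
  assumes "(x, y) \<in> {(u, v). u \<in> \<Omega> \<and> v \<in> \<Omega> \<and> u \<noteq> v \<and> R u v > 0}\<^sup>*" and y: "y \<in> \<Omega>"
  shows "\<exists>k. mpow \<Omega> U k x y > 0"
  using assms(1)
proof (induction rule: converse_rtrancl_induct)
  case base
  show ?case by (rule exI[of _ 0]) simp
next
  case (step u w)
  then obtain k where k: "mpow \<Omega> U k w y > 0" by blast
  from step.hyps(1) have u: "u \<in> \<Omega>" and w: "w \<in> \<Omega>" and uw: "u \<noteq> w" and R: "R u w > 0" by auto
  have Uuw: "U u w > 0" using uw R by (simp add: U_def gen_def)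
  have "U u w * mpow \<Omega> U k w y \<le> (\<Sum>z\<in>\<Omega>. U u z * mpow \<Omega> U k z y)"
    using w fin U_nonneg u mpow_nonneg[of \<Omega> U _ y k] U_nonneg y
    by (intro member_le_sum) (auto intro!: mult_nonneg_nonneg)
  moreover have "U u w * mpow \<Omega> U k w y > 0" using Uuw k by simp
  ultimately show ?case by (intro exI[of _ "Suc k"]) simp
qed

lemma P_1_pos: "x \<in> \<Omega> \<Longrightarrow> y \<in> \<Omega> \<Longrightarrow> P 1 x y > 0"
proof -
  assume x: "x \<in> \<Omega>" and y: "y \<in> \<Omega>"
  obtain k where k: "mpow \<Omega> U k x y > 0"
    using mpow_U_pos_of_path[OF _ y] irr x y unfolding irreducible_def by blast
  have "(\<Sum>j\<in>{k}. 1 ^ j / fact j * mpow \<Omega> U j x y) \<le> mexp \<Omega> U 1 x y"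
    by (rule partial_sum_le_mexp[OF fin U_nonneg x y]) auto
  moreover have "mpow \<Omega> U k x y / fact k > 0" using k by simp
  ultimately have "mexp \<Omega> U 1 x y > 0" by simp
  then show ?thesis using P_eq_uniformized[OF x y] by simp
qed

lemma P_1_uniformly_pos: "\<exists>\<beta>>0. \<forall>x\<in>\<Omega>. \<forall>y\<in>\<Omega>. P 1 x y \<ge> \<beta>"
proof (cases "\<Omega> = {}")
  case True then show ?thesis by (intro exI[of _ 1]) auto
next
  case False
  let ?V = "(\<lambda>(x, y). P 1 x y) ` (\<Omega> \<times> \<Omega>)"
  have fV: "finite ?V" using fin by simp
  have nV: "?V \<noteq> {}" using False by auto
  have pos: "Min ?V > 0" using fV nV P_1_pos by (auto simp: Min_gr_iff)
  have "\<forall>x\<in>\<Omega>. \<forall>y\<in>\<Omega>. Min ?V \<le> P 1 x y"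
  proof (intro ballI)
    fix x y assume "x \<in> \<Omega>" "y \<in> \<Omega>"
    then have "P 1 x y \<in> ?V" by (intro image_eqI[where x="(x, y)"]) auto
    then show "Min ?V \<le> P 1 x y" using fV by (rule Min_le[rotated])
  qed
  then show ?thesis using pos by blast
qed

lemma tv_dist_P_le_1: "x \<in> \<Omega> \<Longrightarrow> t \<ge> 0 \<Longrightarrow> tv_dist \<Omega> (P t x) \<nu> \<le> 1"
proof -
  assume x: "x \<in> \<Omega>" and t: "t \<ge> 0"
  have "(\<Sum>y\<in>\<Omega>. \<bar>P t x y - \<nu> y\<bar>) \<le> (\<Sum>y\<in>\<Omega>. P t x y + \<nu> y)"
  proof (rule sum_mono)
    fix y assume y: "y \<in> \<Omega>"
    then have "P t x y \<ge> 0" "\<nu> y \<ge> 0" using P_nonneg[OF x y t] prob_on_nu by (auto simp: prob_on_def)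
    then show "\<bar>P t x y - \<nu> y\<bar> \<le> P t x y + \<nu> y" unfolding abs_le_iff by linarith
  qed
  also have "\<dots> = 2" using P_row_sum[OF x] prob_on_nu by (simp add: sum.distrib prob_on_def)
  finally show ?thesis by (simp add: tv_dist_def)
qed

lemma tv_dist_P_add_le:
  assumes s: "s \<ge> 0" and t: "t \<ge> 0" and a: "\<And>x. x \<in> \<Omega> \<Longrightarrow> tv_dist \<Omega> (P s x) \<nu> \<le> a"
    and th: "\<And>x y. x \<in> \<Omega> \<Longrightarrow> y \<in> \<Omega> \<Longrightarrow> tv_dist \<Omega> (P t x) (P t y) \<le> \<theta>" and th0: "\<theta> \<ge> 0"
    and x: "x \<in> \<Omega>"
  shows "tv_dist \<Omega> (P (s + t) x) \<nu> \<le> \<theta> * a"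
proof -
  define lam where "lam y = P s x y - \<nu> y" for y
  have s0: "(\<Sum>y\<in>\<Omega>. lam y) = 0"
    using P_row_sum[OF x] prob_on_nu by (simp add: lam_def sum_subtractf prob_on_def)
  have eq: "P (s + t) x z - \<nu> z = (\<Sum>y\<in>\<Omega>. lam y * P t y z)" if z: "z \<in> \<Omega>" for z
    using P_semigroup[OF x z, of s t] P_stationary[OF z, of t]
    by (simp add: lam_def left_diff_distrib sum_subtractf)
  have "tv_dist \<Omega> (P (s + t) x) \<nu> = (1/2) * (\<Sum>z\<in>\<Omega>. \<bar>\<Sum>y\<in>\<Omega>. lam y * P t y z\<bar>)"
    unfolding tv_dist_def using eq by simp
  also have "\<dots> \<le> (1/2) * (\<theta> * (\<Sum>y\<in>\<Omega>. \<bar>lam y\<bar>))"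
    using dobrushin_contraction[OF fin s0, of "P t" \<theta>] th by simp
  also have "\<dots> = \<theta> * tv_dist \<Omega> (P s x) \<nu>" by (simp add: tv_dist_def lam_def)
  also have "\<dots> \<le> \<theta> * a" using a[OF x] th0 by (simp add: mult_left_mono)
  finally show ?thesis .
qed

lemma tv_dist_P_pair_le: assumes x: "x \<in> \<Omega>" and y: "y \<in> \<Omega>" and t: "t \<ge> 0"
  and b: "\<And>z. z \<in> \<Omega> \<Longrightarrow> P t x z \<ge> \<beta>" "\<And>z. z \<in> \<Omega> \<Longrightarrow> P t y z \<ge> \<beta>"
  shows "tv_dist \<Omega> (P t x) (P t y) \<le> 1 - real (card \<Omega>) * \<beta>"
proof -
  have "(\<Sum>z\<in>\<Omega>. \<bar>P t x z - P t y z\<bar>) = (\<Sum>z\<in>\<Omega>. P t x z + P t y z - 2 * min (P t x z) (P t y z))"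
    by (intro sum.cong refl) (auto simp: min_def)
  also have "\<dots> = 2 - 2 * (\<Sum>z\<in>\<Omega>. min (P t x z) (P t y z))"
    using P_row_sum[OF x] P_row_sum[OF y] by (simp add: sum_subtractf sum.distrib sum_distrib_left)
  finally have e: "(\<Sum>z\<in>\<Omega>. \<bar>P t x z - P t y z\<bar>) = 2 - 2 * (\<Sum>z\<in>\<Omega>. min (P t x z) (P t y z))" .
  have "(\<Sum>z\<in>\<Omega>. min (P t x z) (P t y z)) \<ge> (\<Sum>z\<in>\<Omega>. \<beta>)"
    using b by (intro sum_mono) auto
  then have "(\<Sum>z\<in>\<Omega>. min (P t x z) (P t y z)) \<ge> real (card \<Omega>) * \<beta>" by simp
  then show ?thesis unfolding tv_dist_def e by simp
qed

lemma P_1_contraction: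
  assumes ne: "\<Omega> \<noteq> {}"
  shows "\<exists>\<theta>. 0 \<le> \<theta> \<and> \<theta> < 1 \<and> (\<forall>x\<in>\<Omega>. \<forall>y\<in>\<Omega>. tv_dist \<Omega> (P 1 x) (P 1 y) \<le> \<theta>)"
proof -
  obtain \<beta> where bpos: "\<beta> > 0" and b: "\<forall>x\<in>\<Omega>. \<forall>y\<in>\<Omega>. P 1 x y \<ge> \<beta>" using P_1_uniformly_pos by blast
  obtain x0 where x0: "x0 \<in> \<Omega>" using ne by blast
  have "real (card \<Omega>) * \<beta> = (\<Sum>z\<in>\<Omega>. \<beta>)" by simp
  also have "\<dots> \<le> (\<Sum>z\<in>\<Omega>. P 1 x0 z)" using b x0 by (intro sum_mono) auto
  also have "\<dots> = 1" using P_row_sum[OF x0] .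
  finally have le: "real (card \<Omega>) * \<beta> \<le> 1" .
  have cpos: "real (card \<Omega>) > 0" using ne fin by (simp add: card_gt_0_iff)
  show ?thesis
    by (rule exI[of _ "1 - real (card \<Omega>) * \<beta>"])
       (use le cpos bpos tv_dist_P_pair_le b in \<open>auto intro!: tv_dist_P_pair_le\<close>)
qed

lemma tv_dist_P_nat_le_power:
  assumes th0: "0 \<le> \<theta>" and th: "\<forall>x\<in>\<Omega>. \<forall>y\<in>\<Omega>. tv_dist \<Omega> (P 1 x) (P 1 y) \<le> \<theta>"
  shows "\<forall>x\<in>\<Omega>. tv_dist \<Omega> (P (real k) x) \<nu> \<le> \<theta> ^ k"
proof (induction k)
  case 0 then show ?case using tv_dist_P_le_1 by simp
next
  case (Suc k)
  show ?case
  proof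
    fix x assume x: "x \<in> \<Omega>"
    have "tv_dist \<Omega> (P (real k + 1) x) \<nu> \<le> \<theta> * \<theta> ^ k"
      by (rule tv_dist_P_add_le) (use Suc.IH th th0 x in auto)
    then show "tv_dist \<Omega> (P (real (Suc k)) x) \<nu> \<le> \<theta> ^ Suc k" by (simp add: add.commute)
  qed
qed

definition "mix_times = {t. t > 0 \<and> (\<forall>\<eta>\<in>\<Omega>. tv_dist \<Omega> (P t \<eta>) \<nu> \<le> 1/4)}"

lemma mix_times_nonempty: assumes ne: "\<Omega> \<noteq> {}" shows "mix_times \<noteq> {}"
proof -
  obtain \<theta> where th0: "0 \<le> \<theta>" and th1: "\<theta> < 1" and th: "\<forall>x\<in>\<Omega>. \<forall>y\<in>\<Omega>. tv_dist \<Omega> (P 1 x) (P 1 y) \<le> \<theta>"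
    using P_1_contraction[OF ne] by blast
  have "(\<lambda>k. \<theta> ^ k) \<longlonglongrightarrow> 0" using th0 th1 by (intro LIMSEQ_power_zero) auto
  then have "eventually (\<lambda>k. \<theta> ^ k < 1/4) sequentially" by (rule order_tendstoD) simp
  then obtain k where k: "\<theta> ^ k < 1/4" by (auto simp: eventually_sequentially)
  then have "k \<noteq> 0" by (cases k) auto
  then have "real k \<in> mix_times" unfolding mix_times_def using tv_dist_P_nat_le_power[OF th0 th, of k] k by force
  then show ?thesis by blast
qed

lemma mixing_time_eq: "mixing_time \<Omega> R \<nu> = Inf mix_times"
  unfolding mixing_time_def mix_times_def trans_prob_def ..

lemma mixing_time_nonneg: assumes ne: "\<Omega> \<noteq> {}" shows "mixing_time \<Omega> R \<nu> \<ge> 0"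
  unfolding mixing_time_eq using mix_times_nonempty[OF ne]
  by (intro cInf_greatest) (auto simp: mix_times_def)

lemma mixing_time_approx: assumes ne: "\<Omega> \<noteq> {}" and e: "e > 0"
  shows "\<exists>t\<in>mix_times. t < mixing_time \<Omega> R \<nu> + e"
proof -
  have bdd: "bdd_below mix_times" unfolding mix_times_def by (rule bdd_belowI[of _ 0]) auto
  have "Inf mix_times < Inf mix_times + e" using e by simp
  then show ?thesis unfolding mixing_time_eq using cInf_less_iff[OF mix_times_nonempty[OF ne] bdd] by blast
qed

lemma tv_dist_P_mix_time_multiple:
  assumes t: "t \<in> mix_times"
  shows "\<forall>x\<in>\<Omega>. tv_dist \<Omega> (P (real (Suc k) * t) x) \<nu> \<le> (1/2) ^ (k + 2)"
proof (induction k)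
  case 0 then show ?case using t by (simp add: mix_times_def power2_eq_square)
next
  case (Suc k)
  have tpos: "t > 0" and tb: "\<And>x. x \<in> \<Omega> \<Longrightarrow> tv_dist \<Omega> (P t x) \<nu> \<le> 1/4" using t by (auto simp: mix_times_def)
  have th: "tv_dist \<Omega> (P t x) (P t y) \<le> 1/2" if "x \<in> \<Omega>" "y \<in> \<Omega>" for x y
    using tv_dist_triangle[of \<Omega> "P t x" "P t y" \<nu>] tv_dist_commute[of \<Omega> "P t y" \<nu>] tb[OF that(1)] tb[OF that(2)] by simp
  show ?case
  proof
    fix x assume x: "x \<in> \<Omega>"
    have "tv_dist \<Omega> (P (real (Suc k) * t + t) x) \<nu> \<le> 1/2 * (1/2) ^ (k + 2)"
      by (rule tv_dist_P_add_le) (use Suc.IH th x tpos in auto)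
    moreover have "real (Suc (Suc k)) * t = real (Suc k) * t + t" by (simp add: algebra_simps)
    ultimately show "tv_dist \<Omega> (P (real (Suc (Suc k)) * t) x) \<nu> \<le> (1/2) ^ (Suc k + 2)" by simp
  qed
qed

definition "surv_from lam t = (\<Sum>x\<in>\<Omega>. lam x * sv x t)"

lemma sum_split_A: "(\<Sum>z\<in>\<Omega>. f z) = (\<Sum>z\<in>B. f z) + (\<Sum>z\<in>A. f z)"
  using sum.subset_diff[OF A_sub fin, of f] .

lemma sum_A_surv_eq_0: "s \<ge> 0 \<Longrightarrow> (\<Sum>z\<in>A. g z * sv z s) = 0"
  using surv_in_A by (auto intro!: sum.neutral)

lemma surv_after_lag_bounds:
  assumes y: "y \<in> B" and tau: "\<tau> \<ge> 0" and s: "s \<ge> 0"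
    and D: "\<And>y. y \<in> \<Omega> \<Longrightarrow> tv_dist \<Omega> (P \<tau> y) \<nu> \<le> D"
  shows "sv y (\<tau> + s) \<le> surv_from \<nu> s + D" and "sv y (\<tau> + s) \<ge> surv_from \<nu> s - D - (1 - sv y \<tau>)"
proof -
  have yO: "y \<in> \<Omega>" using y by blast
  have sy: "sv y (\<tau> + s) = (\<Sum>z\<in>B. K \<tau> y z * sv z s)" by (rule surv_Markov[OF y tau s])
  have PO: "(\<Sum>z\<in>\<Omega>. P \<tau> y z * sv z s) = (\<Sum>z\<in>B. P \<tau> y z * sv z s)"
    using sum_split_A[of "\<lambda>z. P \<tau> y z * sv z s"] sum_A_surv_eq_0[OF s] by simp
  have tvb: "\<bar>\<Sum>z\<in>\<Omega>. (P \<tau> y z - \<nu> z) * sv z s\<bar> \<le> D"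
  proof -
    have "\<bar>\<Sum>z\<in>\<Omega>. (P \<tau> y z - \<nu> z) * sv z s\<bar> \<le> tv_dist \<Omega> (P \<tau> y) \<nu>"
      by (rule tv_dist_test_function_bound[OF fin]) (use P_row_sum[OF yO] prob_on_nu surv_nonneg surv_le_1 in \<open>auto simp: prob_on_def\<close>)
    then show ?thesis using D[OF yO] by simp
  qed
  have diff: "(\<Sum>z\<in>\<Omega>. (P \<tau> y z - \<nu> z) * sv z s) = (\<Sum>z\<in>\<Omega>. P \<tau> y z * sv z s) - surv_from \<nu> s"
    unfolding surv_from_def by (simp add: left_diff_distrib sum_subtractf)
  have KP: "(\<Sum>z\<in>B. K \<tau> y z * sv z s) \<le> (\<Sum>z\<in>B. P \<tau> y z * sv z s)"
    using K_le_P[OF y _ tau] surv_nonneg by (intro sum_mono mult_right_mono) auto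
  show "sv y (\<tau> + s) \<le> surv_from \<nu> s + D"
    using sy KP PO tvb diff by (simp add: abs_le_iff)
  have "(\<Sum>z\<in>B. P \<tau> y z * sv z s) - (\<Sum>z\<in>B. K \<tau> y z * sv z s) = (\<Sum>z\<in>B. (P \<tau> y z - K \<tau> y z) * sv z s)"
    by (simp add: left_diff_distrib sum_subtractf)
  also have "\<dots> \<le> (\<Sum>z\<in>B. (P \<tau> y z - K \<tau> y z) * 1)"
    using K_le_P[OF y _ tau] surv_le_1 by (intro sum_mono mult_left_mono) auto
  also have "\<dots> = (\<Sum>z\<in>B. P \<tau> y z) - sv y \<tau>"
    using surv_eq_K_row_sum[OF y tau] by (simp add: sum_subtractf)
  also have "(\<Sum>z\<in>B. P \<tau> y z) \<le> 1"
  proof -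
    have "(\<Sum>z\<in>A. P \<tau> y z) \<ge> 0" using P_nonneg[OF yO _ tau] A_sub by (auto intro!: sum_nonneg)
    then show ?thesis using P_row_sum[OF yO, of \<tau>] sum_split_A[of "P \<tau> y"] by simp
  qed
  finally have "(\<Sum>z\<in>B. P \<tau> y z * sv z s) - (\<Sum>z\<in>B. K \<tau> y z * sv z s) \<le> 1 - sv y \<tau>" by simp
  then show "sv y (\<tau> + s) \<ge> surv_from \<nu> s - D - (1 - sv y \<tau>)"
    using sy PO tvb diff by (simp add: abs_le_iff)
qed

lemma surv_lag_bounds:
  assumes x: "x \<in> \<Omega>" and t: "t \<ge> 0" and tau: "\<tau> \<ge> 0" and s: "s \<ge> 0"
    and D: "\<And>y. y \<in> \<Omega> \<Longrightarrow> tv_dist \<Omega> (P \<tau> y) \<nu> \<le> D"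
  shows "sv x (t + \<tau> + s) \<le> sv x t * (surv_from \<nu> s + D)"
    and "sv x (t + \<tau> + s) \<ge> sv x t * (surv_from \<nu> s - D) - (sv x t - sv x (t + \<tau>))"
proof -
  have ts: "t + \<tau> + s \<ge> 0" "t + \<tau> \<ge> 0" using t tau s by auto
  have "(sv x (t + \<tau> + s) \<le> sv x t * (surv_from \<nu> s + D)) \<and>
        (sv x (t + \<tau> + s) \<ge> sv x t * (surv_from \<nu> s - D) - (sv x t - sv x (t + \<tau>)))"
  proof (cases "x \<in> A")
    case True then show ?thesis using surv_in_A ts t by simp
  next
    case False
    then have xB: "x \<in> B" using x by blast
    have e: "sv x (t + \<tau> + s) = (\<Sum>y\<in>B. K t x y * sv y (\<tau> + s))"
      using surv_Markov[OF xB t, of "\<tau> + s"] tau s by (simp add: add.assoc)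
    have e2: "sv x (t + \<tau>) = (\<Sum>y\<in>B. K t x y * sv y \<tau>)" by (rule surv_Markov[OF xB t tau])
    have st: "sv x t = (\<Sum>y\<in>B. K t x y)" by (rule surv_eq_K_row_sum[OF xB t])
    have K0: "\<And>y. y \<in> B \<Longrightarrow> K t x y \<ge> 0" using K_nonneg[OF xB _ t] by blast
    have "sv x (t + \<tau> + s) \<le> (\<Sum>y\<in>B. K t x y * (surv_from \<nu> s + D))"
      unfolding e using surv_after_lag_bounds(1)[OF _ tau s D] K0 by (intro sum_mono mult_left_mono) auto
    also have "\<dots> = sv x t * (surv_from \<nu> s + D)" unfolding st by (simp add: sum_distrib_right)
    finally have u: "sv x (t + \<tau> + s) \<le> sv x t * (surv_from \<nu> s + D)" .
    have "(\<Sum>y\<in>B. K t x y * (surv_from \<nu> s - D - (1 - sv y \<tau>))) \<le> sv x (t + \<tau> + s)"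
      unfolding e using surv_after_lag_bounds(2)[OF _ tau s D] K0 by (intro sum_mono mult_left_mono) auto
    moreover have "(\<Sum>y\<in>B. K t x y * (surv_from \<nu> s - D - (1 - sv y \<tau>))) = sv x t * (surv_from \<nu> s - D) - (sv x t - sv x (t + \<tau>))"
      unfolding st e2 by (simp add: algebra_simps sum.distrib sum_subtractf sum_distrib_left sum_distrib_right)
    ultimately show ?thesis using u by simp
  qed
  then show "sv x (t + \<tau> + s) \<le> sv x t * (surv_from \<nu> s + D)"
    and "sv x (t + \<tau> + s) \<ge> sv x t * (surv_from \<nu> s - D) - (sv x t - sv x (t + \<tau>))" by auto
qed

lemma surv_from_lag_bounds:
  assumes lam: "\<And>x. x \<in> \<Omega> \<Longrightarrow> lam x \<ge> 0" and t: "t \<ge> 0" and tau: "\<tau> \<ge> 0" and s: "s \<ge> 0"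
    and D: "\<And>y. y \<in> \<Omega> \<Longrightarrow> tv_dist \<Omega> (P \<tau> y) \<nu> \<le> D"
  shows "surv_from lam (t + \<tau> + s) \<le> surv_from lam t * (surv_from \<nu> s + D)"
    and "surv_from lam (t + \<tau> + s) \<ge> surv_from lam t * (surv_from \<nu> s - D) - (surv_from lam t - surv_from lam (t + \<tau>))"
proof -
  have "surv_from lam (t + \<tau> + s) \<le> (\<Sum>x\<in>\<Omega>. lam x * (sv x t * (surv_from \<nu> s + D)))"
    unfolding surv_from_def[of lam] using surv_lag_bounds(1)[OF _ t tau s D] lam by (intro sum_mono mult_left_mono) auto
  also have "\<dots> = surv_from lam t * (surv_from \<nu> s + D)" unfolding surv_from_def[of lam] by (simp add: sum_distrib_right mult.assoc)
  finally show "surv_from lam (t + \<tau> + s) \<le> surv_from lam t * (surv_from \<nu> s + D)" .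
  have "(\<Sum>x\<in>\<Omega>. lam x * (sv x t * (surv_from \<nu> s - D) - (sv x t - sv x (t + \<tau>)))) \<le> surv_from lam (t + \<tau> + s)"
    unfolding surv_from_def[of lam] using surv_lag_bounds(2)[OF _ t tau s D] lam by (intro sum_mono mult_left_mono) auto
  moreover have "(\<Sum>x\<in>\<Omega>. lam x * (sv x t * (surv_from \<nu> s - D) - (sv x t - sv x (t + \<tau>))))
      = surv_from lam t * (surv_from \<nu> s - D) - (surv_from lam t - surv_from lam (t + \<tau>))"
  proof -
    have "(\<Sum>x\<in>\<Omega>. lam x * (sv x t * (surv_from \<nu> s - D) - (sv x t - sv x (t + \<tau>))))
        = (\<Sum>x\<in>\<Omega>. (lam x * sv x t) * (surv_from \<nu> s - D) - (lam x * sv x t - lam x * sv x (t + \<tau>)))"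
      by (intro sum.cong refl) (simp add: algebra_simps)
    also have "\<dots> = (\<Sum>x\<in>\<Omega>. lam x * sv x t) * (surv_from \<nu> s - D) - ((\<Sum>x\<in>\<Omega>. lam x * sv x t) - (\<Sum>x\<in>\<Omega>. lam x * sv x (t + \<tau>)))"
      by (simp only: sum_subtractf sum_distrib_right)
    finally show ?thesis unfolding surv_from_def[of lam] .
  qed
  ultimately show "surv_from lam (t + \<tau> + s) \<ge> surv_from lam t * (surv_from \<nu> s - D) - (surv_from lam t - surv_from lam (t + \<tau>))" by simp
qed

lemma nu_nonneg: "x \<in> \<Omega> \<Longrightarrow> \<nu> x \<ge> 0" using prob_on_nu by (simp add: prob_on_def)
lemma nu_sum: "(\<Sum>x\<in>\<Omega>. \<nu> x) = 1" using prob_on_nu by (simp add: prob_on_def)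

lemma surv_from_stationary_decrement_le:
  assumes t: "t \<ge> 0" and tau: "\<tau> \<ge> 0"
  shows "surv_from \<nu> t - surv_from \<nu> (t + \<tau>) \<le> 1 - surv_from \<nu> \<tau>"
proof -
  have px: "sv x t - sv x (t + \<tau>) \<le> (\<Sum>y\<in>B. P t x y * (1 - sv y \<tau>))" if x: "x \<in> \<Omega>" for x
  proof (cases "x \<in> A")
    case True
    have "(\<Sum>y\<in>B. P t x y * (1 - sv y \<tau>)) \<ge> 0"
      using P_nonneg[OF x _ t] surv_le_1 by (auto intro!: sum_nonneg mult_nonneg_nonneg)
    then show ?thesis using True surv_in_A t tau by simp
  next
    case False
    then have xB: "x \<in> B" using x by blast
    have "sv x t - sv x (t + \<tau>) = (\<Sum>y\<in>B. K t x y * (1 - sv y \<tau>))"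
      using surv_eq_K_row_sum[OF xB t] surv_Markov[OF xB t tau] by (simp add: right_diff_distrib sum_subtractf)
    also have "\<dots> \<le> (\<Sum>y\<in>B. P t x y * (1 - sv y \<tau>))"
      using K_le_P[OF xB _ t] surv_le_1 by (intro sum_mono mult_right_mono) auto
    finally show ?thesis .
  qed
  have "surv_from \<nu> t - surv_from \<nu> (t + \<tau>) = (\<Sum>x\<in>\<Omega>. \<nu> x * (sv x t - sv x (t + \<tau>)))"
    unfolding surv_from_def by (simp add: right_diff_distrib sum_subtractf)
  also have "\<dots> \<le> (\<Sum>x\<in>\<Omega>. \<nu> x * (\<Sum>y\<in>B. P t x y * (1 - sv y \<tau>)))"
    using px nu_nonneg by (intro sum_mono mult_left_mono) auto
  also have "\<dots> = (\<Sum>y\<in>B. (\<Sum>x\<in>\<Omega>. \<nu> x * P t x y) * (1 - sv y \<tau>))"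
    by (simp add: sum_distrib_left sum_distrib_right mult.assoc) (rule sum.swap)
  also have "\<dots> = (\<Sum>y\<in>B. \<nu> y * (1 - sv y \<tau>))"
    using P_stationary by (intro sum.cong) auto
  also have "\<dots> \<le> (\<Sum>y\<in>\<Omega>. \<nu> y * (1 - sv y \<tau>))"
    using nu_nonneg surv_le_1 fin by (intro sum_mono2) auto
  also have "\<dots> = 1 - surv_from \<nu> \<tau>"
    unfolding surv_from_def by (simp add: right_diff_distrib sum_subtractf nu_sum)
  finally show ?thesis .
qed

lemma surv_from_nonneg: "(\<And>x. x \<in> \<Omega> \<Longrightarrow> lam x \<ge> 0) \<Longrightarrow> surv_from lam t \<ge> 0"
  unfolding surv_from_def using surv_nonneg by (auto intro!: sum_nonneg)

lemma surv_from_le_1: assumes "prob_on \<Omega> lam" shows "surv_from lam t \<le> 1"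
proof -
  have "surv_from lam t \<le> (\<Sum>x\<in>\<Omega>. lam x * 1)"
    unfolding surv_from_def using assms surv_le_1 by (intro sum_mono mult_left_mono) (auto simp: prob_on_def)
  then show ?thesis using assms by (simp add: prob_on_def)
qed

lemma surv_from_antimono: assumes "\<And>x. x \<in> \<Omega> \<Longrightarrow> lam x \<ge> 0" shows "antimono_on {0..} (surv_from lam)"
  unfolding surv_from_def using assms surv_antimono by (auto intro!: monotone_onI sum_mono mult_left_mono)

lemma surv_from_stationary_0: "surv_from \<nu> 0 = (\<Sum>x\<in>B. \<nu> x)"
proof -
  have "surv_from \<nu> 0 = (\<Sum>x\<in>B. \<nu> x * sv x 0) + (\<Sum>x\<in>A. \<nu> x * sv x 0)"
    unfolding surv_from_def by (rule sum_split_A)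
  also have "(\<Sum>x\<in>A. \<nu> x * sv x 0) = 0" using sum_A_surv_eq_0[of 0 \<nu>] by simp
  also have "(\<Sum>x\<in>B. \<nu> x * sv x 0) = (\<Sum>x\<in>B. \<nu> x)" using surv_0 by simp
  finally show ?thesis by simp
qed

lemma hit_cdf_eq_surv_from: "prob_on \<Omega> lam \<Longrightarrow> hit_cdf \<Omega> R A lam t = 1 - surv_from lam t"
  unfolding hit_cdf_def surv_from_def prob_on_def by (simp add: right_diff_distrib sum_subtractf)

definition "flux = (\<Sum>y\<in>B. \<nu> y * \<rho> y)"

lemma flux_nonneg: "flux \<ge> 0"
  unfolding flux_def using nu_nonneg rho_nonneg by (auto intro!: sum_nonneg)

lemma surv_from_stationary_step_ge: assumes t: "t \<ge> 0" and h: "h \<ge> 0"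
  shows "surv_from \<nu> (t + h) \<ge> surv_from \<nu> t - exit_bound\<^sup>2 * h\<^sup>2 - h * flux"
proof -
  have px: "sv x (t + h) \<ge> sv x t * (1 - exit_bound\<^sup>2 * h\<^sup>2) - h * (\<Sum>y\<in>B. P t x y * \<rho> y)" if x: "x \<in> \<Omega>" for x
  proof (cases "x \<in> A")
    case True
    have "(\<Sum>y\<in>B. P t x y * \<rho> y) \<ge> 0"
      using P_nonneg[OF x _ t] rho_nonneg by (auto intro!: sum_nonneg)
    then show ?thesis using True surv_in_A t h by (simp add: mult_nonneg_nonneg)
  next
    case False
    then have xB: "x \<in> B" using x by blast
    have K0: "\<And>y. y \<in> B \<Longrightarrow> K t x y \<ge> 0" using K_nonneg[OF xB _ t] by blast
    have "sv x (t + h) = (\<Sum>y\<in>B. K t x y * sv y h)" by (rule surv_Markov[OF xB t h])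
    also have "\<dots> \<ge> (\<Sum>y\<in>B. K t x y * (1 - h * \<rho> y - exit_bound\<^sup>2 * h\<^sup>2))"
      using surv_short_time_ge[OF _ h] K0 by (intro sum_mono mult_left_mono) auto
    finally have a: "sv x (t + h) \<ge> (\<Sum>y\<in>B. K t x y * (1 - h * \<rho> y - exit_bound\<^sup>2 * h\<^sup>2))" .
    have b: "(\<Sum>y\<in>B. K t x y * (1 - h * \<rho> y - exit_bound\<^sup>2 * h\<^sup>2)) = sv x t * (1 - exit_bound\<^sup>2 * h\<^sup>2) - h * (\<Sum>y\<in>B. K t x y * \<rho> y)"
      using surv_eq_K_row_sum[OF xB t] by (simp add: algebra_simps sum_subtractf sum_distrib_left sum_distrib_right sum.distrib)
    have c: "(\<Sum>y\<in>B. K t x y * \<rho> y) \<le> (\<Sum>y\<in>B. P t x y * \<rho> y)"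
      using K_le_P[OF xB _ t] rho_nonneg by (intro sum_mono mult_right_mono) auto
    show ?thesis using a b c h by (smt (verit, best) mult_left_mono)
  qed
  have "surv_from \<nu> (t + h) \<ge> (\<Sum>x\<in>\<Omega>. \<nu> x * (sv x t * (1 - exit_bound\<^sup>2 * h\<^sup>2) - h * (\<Sum>y\<in>B. P t x y * \<rho> y)))"
    unfolding surv_from_def using px nu_nonneg by (intro sum_mono mult_left_mono) auto
  also have "(\<Sum>x\<in>\<Omega>. \<nu> x * (sv x t * (1 - exit_bound\<^sup>2 * h\<^sup>2) - h * (\<Sum>y\<in>B. P t x y * \<rho> y)))
      = surv_from \<nu> t * (1 - exit_bound\<^sup>2 * h\<^sup>2) - h * (\<Sum>x\<in>\<Omega>. \<nu> x * (\<Sum>y\<in>B. P t x y * \<rho> y))"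
    unfolding surv_from_def by (simp add: right_diff_distrib sum_subtractf sum_distrib_left sum_distrib_right mult_ac)
  also have "(\<Sum>x\<in>\<Omega>. \<nu> x * (\<Sum>y\<in>B. P t x y * \<rho> y)) = flux"
  proof -
    have "(\<Sum>x\<in>\<Omega>. \<nu> x * (\<Sum>y\<in>B. P t x y * \<rho> y)) = (\<Sum>x\<in>\<Omega>. \<Sum>y\<in>B. \<nu> x * P t x y * \<rho> y)"
      by (simp add: sum_distrib_left mult.assoc)
    also have "\<dots> = (\<Sum>y\<in>B. \<Sum>x\<in>\<Omega>. \<nu> x * P t x y * \<rho> y)" by (rule sum.swap)
    also have "\<dots> = (\<Sum>y\<in>B. (\<Sum>x\<in>\<Omega>. \<nu> x * P t x y) * \<rho> y)" by (simp add: sum_distrib_right)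
    also have "\<dots> = flux" unfolding flux_def using P_stationary by (intro sum.cong) auto
    finally show ?thesis .
  qed
  finally have d: "surv_from \<nu> (t + h) \<ge> surv_from \<nu> t * (1 - exit_bound\<^sup>2 * h\<^sup>2) - h * flux" .
  have "surv_from \<nu> t * (exit_bound\<^sup>2 * h\<^sup>2) \<le> 1 * (exit_bound\<^sup>2 * h\<^sup>2)"
    using surv_from_le_1[OF prob_on_nu] by (intro mult_right_mono) auto
  then show ?thesis using d by (simp add: algebra_simps)
qed

lemma surv_from_stationary_steps_ge: assumes h: "h \<ge> 0"
  shows "surv_from \<nu> (real m * h) \<ge> surv_from \<nu> 0 - real m * (exit_bound\<^sup>2 * h\<^sup>2 + h * flux)"
proof (induction m)
  case 0 then show ?case by simp
next
  case (Suc m)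
  have "surv_from \<nu> (real m * h + h) \<ge> surv_from \<nu> (real m * h) - exit_bound\<^sup>2 * h\<^sup>2 - h * flux"
    by (rule surv_from_stationary_step_ge) (use h in auto)
  moreover have "real (Suc m) * h = real m * h + h" by (simp add: algebra_simps)
  ultimately show ?case using Suc.IH by (simp add: algebra_simps)
qed

text \<open>Subdividing \<open>[0, \<tau>]\<close> into \<open>n\<close> steps, the quadratic short-time errors add up to \<open>O(\<tau>\<^sup>2 / n)\<close>.\<close>
lemma surv_from_stationary_ge_flux: assumes tau: "\<tau> \<ge> 0" shows "surv_from \<nu> \<tau> \<ge> surv_from \<nu> 0 - \<tau> * flux"
proof (rule ccontr)
  assume "\<not> ?thesis"
  then have dpos: "surv_from \<nu> 0 - \<tau> * flux - surv_from \<nu> \<tau> > 0" by simp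
  define d where "d = surv_from \<nu> 0 - \<tau> * flux - surv_from \<nu> \<tau>"
  obtain n :: nat where n: "real n > exit_bound\<^sup>2 * \<tau>\<^sup>2 / d" using reals_Archimedean2 by blast
  have npos: "n > 0"
  proof -
    have "exit_bound\<^sup>2 * \<tau>\<^sup>2 / d \<ge> 0" using dpos by (simp add: d_def)
    then show ?thesis using n by (cases n) auto
  qed
  define h where "h = \<tau> / real n"
  have h0: "h \<ge> 0" using tau by (simp add: h_def)
  have "surv_from \<nu> (real n * h) \<ge> surv_from \<nu> 0 - real n * (exit_bound\<^sup>2 * h\<^sup>2 + h * flux)" by (rule surv_from_stationary_steps_ge[OF h0])
  moreover have "real n * h = \<tau>" using npos by (simp add: h_def)
  moreover have "real n * (exit_bound\<^sup>2 * h\<^sup>2 + h * flux) = exit_bound\<^sup>2 * \<tau>\<^sup>2 / real n + \<tau> * flux"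
    using npos by (simp add: h_def power2_eq_square field_simps)
  ultimately have "surv_from \<nu> \<tau> \<ge> surv_from \<nu> 0 - exit_bound\<^sup>2 * \<tau>\<^sup>2 / real n - \<tau> * flux" by simp
  then have "exit_bound\<^sup>2 * \<tau>\<^sup>2 / real n \<ge> d" by (simp add: d_def)
  then have "exit_bound\<^sup>2 * \<tau>\<^sup>2 \<ge> d * real n" using npos by (simp add: field_simps)
  moreover have "d * real n > exit_bound\<^sup>2 * \<tau>\<^sup>2" using n dpos by (simp add: d_def field_simps)
  ultimately show False by simp
qed

lemma flux_le_escape_rate: "flux \<le> escape_rate \<Omega> R A \<nu>"
proof -
  have er: "escape_rate \<Omega> R A \<nu> = flux / (\<Sum>x\<in>B. \<nu> x)"
    unfolding escape_rate_def flux_def \<rho>_def by simp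
  have nb: "(\<Sum>x\<in>B. \<nu> x) \<le> 1"
    using nu_sum sum_split_A[of \<nu>] nu_nonneg A_sub by (smt (verit, best) in_mono sum_nonneg)
  show ?thesis
  proof (cases "(\<Sum>x\<in>B. \<nu> x) = 0")
    case True
    moreover have "\<forall>x\<in>B. \<nu> x \<ge> 0" using nu_nonneg by blast
    ultimately have "\<forall>x\<in>B. \<nu> x = 0" using finite_B sum_nonneg_eq_0_iff by blast
    then have "flux = 0" unfolding flux_def by simp
    then show ?thesis using er by simp
  next
    case False
    moreover have "(\<Sum>x\<in>B. \<nu> x) \<ge> 0" using nu_nonneg by (intro sum_nonneg) auto
    ultimately have pos: "(\<Sum>x\<in>B. \<nu> x) > 0" by simp
    have "flux \<le> flux / (\<Sum>x\<in>B. \<nu> x)"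
      using pos nb flux_nonneg by (simp add: le_divide_eq mult_left_le)
    then show ?thesis using er by simp
  qed
qed

lemma surv_geometric_decay: "\<exists>q. 0 \<le> q \<and> q < 1 \<and> (\<forall>n::nat. \<forall>x\<in>\<Omega>. sv x (real n) \<le> q ^ n)"
proof -
  obtain \<beta> where bpos: "\<beta> > 0" and b: "\<forall>x\<in>\<Omega>. \<forall>y\<in>\<Omega>. P 1 x y \<ge> \<beta>" using P_1_uniformly_pos by blast
  define q where "q = max (1 - \<beta>) 0"
  have q0: "q \<ge> 0" and q1: "q < 1" using bpos by (auto simp: q_def)
  obtain a0 where a0: "a0 \<in> A" using A_ne by blast
  have s1: "sv x 1 \<le> q" if xB: "x \<in> B" for x
  proof -
    have xO: "x \<in> \<Omega>" using xB by blast
    have "P 1 x a0 \<le> (\<Sum>a\<in>A. P 1 x a)"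
      using a0 A_sub P_nonneg[OF xO] finite_subset[OF A_sub fin]
      by (intro member_le_sum) auto
    moreover have "P 1 x a0 \<ge> \<beta>" using b xO a0 A_sub by blast
    ultimately have "(\<Sum>a\<in>A. P 1 x a) \<ge> \<beta>" by simp
    then show ?thesis using K_row_sum_le[OF xB, of 1] surv_eq_K_row_sum[OF xB, of 1] by (simp add: q_def)
  qed
  have "\<forall>x\<in>\<Omega>. sv x (real n) \<le> q ^ n" for n
  proof (induction n)
    case 0 then show ?case using surv_le_1 by simp
  next
    case (Suc n)
    show ?case
    proof
      fix x assume x: "x \<in> \<Omega>"
      show "sv x (real (Suc n)) \<le> q ^ Suc n"
      proof (cases "x \<in> A")
        case True then show ?thesis using surv_in_A q0 by simp
      next
        case False
        then have xB: "x \<in> B" using x by blast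
        have "sv x (1 + real n) = (\<Sum>y\<in>B. K 1 x y * sv y (real n))" by (rule surv_Markov[OF xB]) auto
        also have "\<dots> \<le> (\<Sum>y\<in>B. K 1 x y * q ^ n)"
          using Suc.IH K_nonneg[OF xB] by (intro sum_mono mult_left_mono) auto
        also have "\<dots> = sv x 1 * q ^ n" using surv_eq_K_row_sum[OF xB, of 1] by (simp add: sum_distrib_right)
        also have "\<dots> \<le> q * q ^ n" using s1[OF xB] q0 by (intro mult_right_mono) auto
        finally show ?thesis by (simp add: add.commute)
      qed
    qed
  qed
  then show ?thesis using q0 q1 by blast
qed

lemma surv_antimono_on: "x \<in> \<Omega> \<Longrightarrow> antimono_on {0..} (\<lambda>t. sv x t)"
  using surv_antimono by (auto intro!: monotone_onI)

lemma surv_integrable: assumes x: "x \<in> \<Omega>" shows "(\<lambda>t. sv x t) integrable_on {0..}"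
proof -
  obtain q where q0: "0 \<le> q" and q1: "q < 1" and qd: "\<forall>n::nat. \<forall>x\<in>\<Omega>. sv x (real n) \<le> q ^ n"
    using surv_geometric_decay by blast
  have C: "integral {0..real k} (\<lambda>t. sv x t) \<le> 1 / (1 - q)" for k :: nat
  proof -
    have "integral {0..real k * 1} (\<lambda>t. sv x t) \<le> 1 * (\<Sum>n<k. sv x (real n * 1))"
      by (rule integral_antimono_on_Riemann_bounds(1)[OF surv_antimono_on[OF x]]) simp
    also have "\<dots> = (\<Sum>n<k. sv x (real n))" by simp
    also have "\<dots> \<le> (\<Sum>n<k. q ^ n)" using qd x by (intro sum_mono) auto
    also have "\<dots> = (1 - q ^ k) / (1 - q)" using q1 sum_gp_strict[of q k] by simp
    also have "\<dots> \<le> 1 / (1 - q)" using q0 q1 by (intro divide_right_mono) auto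
    finally show ?thesis by simp
  qed
  show ?thesis by (rule antimono_on_nonneg_integrable_on_halfline(1)[OF surv_antimono_on[OF x] _ C]) (use surv_nonneg x in auto)
qed

lemma surv_cmul_integrable: "x \<in> \<Omega> \<Longrightarrow> (\<lambda>t. c * sv x t) integrable_on {0..}"
  using integrable_on_cmult_left[OF surv_integrable, of x c] by simp

lemma surv_from_integrable: "(\<lambda>t. surv_from lam t) integrable_on {0..}"
  unfolding surv_from_def
  by (intro integrable_sum fin surv_cmul_integrable)

lemma mean_hit_eq_integral: "mean_hit \<Omega> R A \<nu> = integral {0..} (surv_from \<nu>)"
proof -
  have "integral {0..} (surv_from \<nu>) = (\<Sum>x\<in>\<Omega>. integral {0..} (\<lambda>t. \<nu> x * sv x t))"
    unfolding surv_from_def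
    by (rule integral_sum[OF fin]) (rule surv_cmul_integrable)
  also have "\<dots> = (\<Sum>x\<in>\<Omega>. \<nu> x * integral {0..} (\<lambda>t. sv x t))"
    using integral_cmul[of "{0::real..}" "\<nu> _" "\<lambda>t. sv _ t"] by simp
  finally show ?thesis unfolding mean_hit_def by simp
qed

lemma escape_rate_nonneg: "escape_rate \<Omega> R A \<nu> \<ge> 0"
  using flux_nonneg flux_le_escape_rate by simp

lemma surv_from_stationary_0_eq: "surv_from \<nu> 0 = 1 - (\<Sum>x\<in>A. \<nu> x)"
  using surv_from_stationary_0 sum_split_A[of \<nu>] nu_sum by simp

lemma stationary_hit_prob_le:
  assumes "\<tau> \<ge> 0"
  shows "1 - surv_from \<nu> \<tau> \<le> (\<Sum>x\<in>A. \<nu> x) + \<tau> * escape_rate \<Omega> R A \<nu>"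
  using surv_from_stationary_ge_flux[OF assms] surv_from_stationary_0_eq
    mult_left_mono[OF flux_le_escape_rate assms] by simp

lemma surv_from_stationary_lag_bounds:
  assumes tv: "\<And>y. y \<in> \<Omega> \<Longrightarrow> tv_dist \<Omega> (P \<tau> y) \<nu> \<le> D" and D: "D \<ge> 0"
    and \<tau>: "\<tau> \<ge> 0" and t: "t \<ge> 0" and s: "s \<ge> 0"
  defines "\<epsilon> \<equiv> D + (1 - surv_from \<nu> \<tau>)"
  shows "surv_from \<nu> (t + \<tau> + s) \<le> surv_from \<nu> t * (surv_from \<nu> s + \<epsilon>)"
    and "surv_from \<nu> t * (surv_from \<nu> s - \<epsilon>) - \<epsilon> \<le> surv_from \<nu> (t + \<tau> + s)"
proof -
  have D_le: "D \<le> \<epsilon>" using surv_from_le_1[OF prob_on_nu, of \<tau>] by (simp add: \<epsilon>_def)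
  have F0: "surv_from \<nu> t \<ge> 0" using surv_from_nonneg nu_nonneg by blast
  have "surv_from \<nu> (t + \<tau> + s) \<le> surv_from \<nu> t * (surv_from \<nu> s + D)"
    by (rule surv_from_lag_bounds(1)[OF nu_nonneg t \<tau> s tv])
  also have "\<dots> \<le> surv_from \<nu> t * (surv_from \<nu> s + \<epsilon>)"
    using D_le F0 by (intro mult_left_mono) auto
  finally show "surv_from \<nu> (t + \<tau> + s) \<le> surv_from \<nu> t * (surv_from \<nu> s + \<epsilon>)" .
  have "surv_from \<nu> t * (surv_from \<nu> s - D) - (surv_from \<nu> t - surv_from \<nu> (t + \<tau>))
      \<le> surv_from \<nu> (t + \<tau> + s)"
    by (rule surv_from_lag_bounds(2)[OF nu_nonneg t \<tau> s tv])
  moreover have "surv_from \<nu> t * (surv_from \<nu> s - \<epsilon>) \<le> surv_from \<nu> t * (surv_from \<nu> s - D)"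
    using D_le F0 by (intro mult_left_mono) auto
  moreover have "surv_from \<nu> t - surv_from \<nu> (t + \<tau>) \<le> \<epsilon>"
    using surv_from_stationary_decrement_le[OF t \<tau>] D by (simp add: \<epsilon>_def)
  ultimately show "surv_from \<nu> t * (surv_from \<nu> s - \<epsilon>) - \<epsilon> \<le> surv_from \<nu> (t + \<tau> + s)"
    by simp
qed

lemma surv_from_initial_lag_bounds:
  assumes lam: "prob_on \<Omega> lam" and tv: "\<And>y. y \<in> \<Omega> \<Longrightarrow> tv_dist \<Omega> (P \<tau> y) \<nu> \<le> D"
    and D: "D \<ge> 0" and \<tau>: "\<tau> \<ge> 0" and t: "t \<ge> 0" and s: "s \<ge> 0"
  shows "surv_from lam (t + \<tau> + s) \<le> surv_from \<nu> s + D"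
    and "surv_from \<nu> s - D - (1 - surv_from lam (t + \<tau>)) \<le> surv_from lam (t + \<tau> + s)"
proof -
  have lam0: "\<And>x. x \<in> \<Omega> \<Longrightarrow> lam x \<ge> 0" using lam by (simp add: prob_on_def)
  have G1: "surv_from lam t \<le> 1" by (rule surv_from_le_1[OF lam])
  have F_s: "0 \<le> surv_from \<nu> s" "surv_from \<nu> s \<le> 1"
    using surv_from_nonneg[OF nu_nonneg] surv_from_le_1[OF prob_on_nu] by auto
  have "surv_from lam (t + \<tau> + s) \<le> surv_from lam t * (surv_from \<nu> s + D)"
    by (rule surv_from_lag_bounds(1)[OF lam0 t \<tau> s tv])
  also have "\<dots> \<le> 1 * (surv_from \<nu> s + D)"
    using G1 F_s D by (intro mult_right_mono) auto
  finally show "surv_from lam (t + \<tau> + s) \<le> surv_from \<nu> s + D" by simp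
  have "surv_from lam t * (surv_from \<nu> s - D) - (surv_from lam t - surv_from lam (t + \<tau>))
      \<le> surv_from lam (t + \<tau> + s)"
    by (rule surv_from_lag_bounds(2)[OF lam0 t \<tau> s tv])
  moreover have "(1 - surv_from lam t) * (surv_from \<nu> s - D) \<le> (1 - surv_from lam t) * 1"
    using G1 F_s D by (intro mult_left_mono) auto
  ultimately show "surv_from \<nu> s - D - (1 - surv_from lam (t + \<tau>)) \<le> surv_from lam (t + \<tau> + s)"
    by (simp add: algebra_simps)
qed

end

section \<open>Approximately memoryless survival functions\<close>

lemma ex_pos_of_eventually_at_right_0:
  assumes "eventually P (at_right (0::real))"
  shows "\<exists>\<kappa>>0. P \<kappa>"
  using eventually_happens'[OF trivial_limit_at_right_real eventually_conj[OF eventually_at_right_less assms]]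
  by blast

text \<open>
  An approximately memoryless survival function \<open>F\<close> (lag \<open>\<tau>\<close>, error \<open>\<epsilon>\<close>) with mean \<open>T\<close> is cut
  into blocks of length \<open>h = \<delta> T\<close>. If \<open>p\<close> is the survival probability over a block shortened by
  the lag, then \<open>F\<close> decays along multiples of \<open>h\<close> geometrically with ratio \<open>p\<close> up to \<open>\<epsilon>\<close>, and
  comparing the Riemann sums of \<open>F\<close> with \<open>T = h / \<delta>\<close> pins \<open>p\<close> between \<open>1 - \<delta>\<close> and \<open>1 / (1 + \<delta>)\<close>.
\<close>
locale approx_memoryless_block =
  fixes F :: "real \<Rightarrow> real" and \<tau> \<epsilon> T \<delta> :: real
  assumes anti: "antimono_on {0..} F"
    and nn: "\<And>t. t \<ge> 0 \<Longrightarrow> F t \<ge> 0" and le1: "\<And>t. t \<ge> 0 \<Longrightarrow> F t \<le> 1"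
    and up: "\<And>t s. t \<ge> 0 \<Longrightarrow> s \<ge> 0 \<Longrightarrow> F (t + \<tau> + s) \<le> F t * (F s + \<epsilon>)"
    and low: "\<And>t s. t \<ge> 0 \<Longrightarrow> s \<ge> 0 \<Longrightarrow> F (t + \<tau> + s) \<ge> F t * (F s - \<epsilon>) - \<epsilon>"
    and eps: "\<epsilon> \<ge> 0" and Tpos: "T > 0" and dpos: "\<delta> > 0" and tau: "0 \<le> \<tau>" "\<tau> \<le> \<delta> * T"
    and Fint: "F integrable_on {0..}" and Tint: "T = integral {0..} F"
begin

definition "h = \<delta> * T"
definition "p = F (h - \<tau>)"
definition "q = max (p - \<epsilon>) 0"

lemma h_pos: "h > 0" unfolding h_def using dpos Tpos by simp
lemma h_minus_lag_nonneg: "h - \<tau> \<ge> 0" unfolding h_def using tau by simp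
lemma p_nonneg: "p \<ge> 0" unfolding p_def using nn h_minus_lag_nonneg by simp
lemma p_le_1: "p \<le> 1" unfolding p_def using le1 h_minus_lag_nonneg by simp
lemma q_nonneg: "q \<ge> 0" and q_le_1: "q \<le> 1" unfolding q_def using p_le_1 eps by auto

lemma F_Suc_block: "F (real (Suc m) * h) = F (real m * h + \<tau> + (h - \<tau>))"
  by (simp add: algebra_simps)

lemma F_blocks_le: "F (real m * h) \<le> (p + \<epsilon>) ^ m"
proof (induction m)
  case 0 then show ?case using le1[of 0] by simp
next
  case (Suc m)
  have "F (real (Suc m) * h) \<le> F (real m * h) * (p + \<epsilon>)"
    unfolding F_Suc_block p_def using up[of "real m * h" "h - \<tau>"] h_pos h_minus_lag_nonneg by simp
  also have "\<dots> \<le> (p + \<epsilon>) ^ m * (p + \<epsilon>)"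
    using Suc.IH p_nonneg eps by (intro mult_right_mono) auto
  finally show ?case by (simp add: mult.commute)
qed

lemma F_blocks_ge: "F 0 * q ^ m - real m * \<epsilon> \<le> F (real m * h)"
proof (induction m)
  case 0 then show ?case by simp
next
  case (Suc m)
  show ?case
  proof (cases "p - \<epsilon> \<ge> 0")
    case True
    then have qq: "q = p - \<epsilon>" unfolding q_def by simp
    have "F (real (Suc m) * h) \<ge> F (real m * h) * q - \<epsilon>"
      unfolding F_Suc_block qq p_def using low[of "real m * h" "h - \<tau>"] h_pos h_minus_lag_nonneg by simp
    moreover have "F (real m * h) * q \<ge> (F 0 * q ^ m - real m * \<epsilon>) * q"
      using Suc.IH q_nonneg by (rule mult_right_mono)
    moreover have "real m * \<epsilon> * q \<le> real m * \<epsilon>"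
      using q_nonneg q_le_1 eps by (simp add: mult_left_le)
    ultimately show ?thesis by (simp add: algebra_simps)
  next
    case False
    then have "q = 0" by (simp add: q_def)
    have "0 \<le> F (real (Suc m) * h)" "0 \<le> real (Suc m) * \<epsilon>" using nn h_pos eps by simp_all
    then show ?thesis unfolding \<open>q = 0\<close> by simp
  qed
qed

lemma p_ge: "1 - \<delta> - \<epsilon> \<le> p"
proof (rule ccontr)
  assume small: "\<not> 1 - \<delta> - \<epsilon> \<le> p"
  define r where "r = p + \<epsilon>"
  have r0: "r \<ge> 0" and r1: "r < 1" using p_nonneg eps small dpos by (auto simp: r_def)
  have "integral {0..real k} F \<le> h / (1 - r)" for k :: nat
  proof -
    obtain M :: nat where "real k / h \<le> real M" using real_arch_simple by blast
    then have kM: "real k \<le> real M * h" using h_pos by (simp add: field_simps)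
    have "integral {0..real k} F \<le> integral {0..real M * h} F"
      by (rule integral_subset_le) (use kM antimono_on_integrable_on[OF anti, of 0] nn in auto)
    also have "\<dots> \<le> h * (\<Sum>n<M. F (real n * h))"
      by (rule integral_antimono_on_Riemann_bounds(1)[OF anti]) (use h_pos in simp)
    also have "\<dots> \<le> h * (\<Sum>n<M. r ^ n)"
      using F_blocks_le h_pos by (intro mult_left_mono sum_mono) (auto simp: r_def)
    also have "(\<Sum>n<M. r ^ n) = (1 - r ^ M) / (1 - r)"
      using r1 sum_gp_strict[of r M] by simp
    also have "\<dots> \<le> 1 / (1 - r)" using r0 r1 by (intro divide_right_mono) auto
    finally show ?thesis using h_pos by (simp add: mult_left_mono)
  qed
  then have "T \<le> h / (1 - r)"
    using antimono_on_nonneg_integrable_on_halfline(2)[OF anti nn] Tint by simp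
  then have "T * (1 - r) \<le> T * \<delta>" using r1 by (simp add: h_def field_simps)
  then show False using Tpos small by (simp add: r_def)
qed

lemma weighted_block_sum_le:
  assumes r0: "0 \<le> r" and pr: "r \<le> p - \<epsilon>"
  shows "F 0 * (\<Sum>m<M. r ^ Suc m) - (\<Sum>m<M. real (Suc m) * \<epsilon>) \<le> 1 / \<delta>"
proof -
  have "h * (F 0 * (\<Sum>m<M. r ^ Suc m) - (\<Sum>m<M. real (Suc m) * \<epsilon>))
      = h * (\<Sum>m<M. F 0 * r ^ Suc m - real (Suc m) * \<epsilon>)"
    by (simp add: sum_subtractf sum_distrib_left)
  also have "\<dots> \<le> h * (\<Sum>m<M. F (real (Suc m) * h))"
  proof (intro mult_left_mono sum_mono)
    fix m
    have "F 0 * r ^ Suc m \<le> F 0 * q ^ Suc m"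
      using r0 pr nn[of 0] by (intro mult_left_mono power_mono) (auto simp: q_def)
    then show "F 0 * r ^ Suc m - real (Suc m) * \<epsilon> \<le> F (real (Suc m) * h)"
      using F_blocks_ge[of "Suc m"] by simp
  qed (use h_pos in simp)
  also have "\<dots> \<le> integral {0..real M * h} F"
    by (rule integral_antimono_on_Riemann_bounds(2)[OF anti]) (use h_pos in simp)
  also have "\<dots> \<le> integral {0..} F"
    by (rule integral_le_integral_halfline[OF anti nn Fint]) (use h_pos in auto)
  also have "\<dots> = h * (1 / \<delta>)" using dpos by (simp add: Tint[symmetric] h_def)
  finally show ?thesis using h_pos by (rule mult_left_le_imp_le)
qed

end

locale approx_memoryless_sequence =
  fixes F :: "nat \<Rightarrow> real \<Rightarrow> real" and \<tau> \<epsilon> T :: "nat \<Rightarrow> real"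
  assumes anti: "\<And>N. antimono_on {0..} (F N)"
    and nn: "\<And>N t. t \<ge> 0 \<Longrightarrow> F N t \<ge> 0" and le1: "\<And>N t. t \<ge> 0 \<Longrightarrow> F N t \<le> 1"
    and up: "\<And>N t s. t \<ge> 0 \<Longrightarrow> s \<ge> 0 \<Longrightarrow> F N (t + \<tau> N + s) \<le> F N t * (F N s + \<epsilon> N)"
    and low: "\<And>N t s. t \<ge> 0 \<Longrightarrow> s \<ge> 0 \<Longrightarrow> F N (t + \<tau> N + s) \<ge> F N t * (F N s - \<epsilon> N) - \<epsilon> N"
    and eps_nonneg: "\<And>N. \<epsilon> N \<ge> 0" and lag_nonneg: "\<And>N. \<tau> N \<ge> 0"
    and Fint: "\<And>N. F N integrable_on {0..}" and Tint: "\<And>N. T N = integral {0..} (F N)"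
    and F_0: "(\<lambda>N. F N 0) \<longlonglongrightarrow> 1" and eps_lim: "\<epsilon> \<longlonglongrightarrow> 0"
    and lag_T: "(\<lambda>N. \<tau> N / T N) \<longlonglongrightarrow> 0" and T_pos: "eventually (\<lambda>N. T N > 0) sequentially"
begin

lemma eventually_block:
  assumes "\<delta> > 0"
  shows "eventually (\<lambda>N. approx_memoryless_block (F N) (\<tau> N) (\<epsilon> N) (T N) \<delta>) sequentially"
  using T_pos order_tendstoD(2)[OF lag_T assms]
proof eventually_elim
  case (elim N)
  then have "\<tau> N \<le> \<delta> * T N" by (simp add: field_simps)
  then show ?case
    by (intro approx_memoryless_block.intro[OF anti nn[where N=N] le1[where N=N] up[where N=N]
          low[where N=N] eps_nonneg elim(1) assms lag_nonneg _ Fint Tint])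
qed

lemma block_surv_le:
  assumes d: "\<delta> > 0" and k: "\<kappa> > 0"
  shows "eventually (\<lambda>N. F N (\<delta> * T N - \<tau> N) \<le> 1 / (1 + \<delta>) + \<kappa>) sequentially"
proof (cases "1 / (1 + \<delta>) + \<kappa> < 1")
  case False
  show ?thesis using eventually_block[OF d]
  proof eventually_elim
    case (elim N)
    interpret approx_memoryless_block "F N" "\<tau> N" "\<epsilon> N" "T N" \<delta> by (rule elim)
    show ?case using p_le_1 False by (simp add: p_def h_def)
  qed
next
  case True
  define r where "r = 1 / (1 + \<delta>) + \<kappa> / 2"
  have r0: "0 \<le> r" and r1: "r < 1" using True d k by (auto simp: r_def)
  have "r * (1 + \<delta>) > 1 / (1 + \<delta>) * (1 + \<delta>)"
    using d k by (intro mult_strict_right_mono) (auto simp: r_def)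
  also have "1 / (1 + \<delta>) * (1 + \<delta>) = 1" using d by simp
  finally have "r * \<delta> > 1 - r" by (simp add: algebra_simps)
  then have big: "r / (1 - r) > 1 / \<delta>" using r1 d by (simp add: field_simps)
  have "(\<lambda>m. r ^ Suc m) sums (r * (1 / (1 - r)))"
    using sums_mult[OF geometric_sums[of r], of r] r0 r1 by simp
  then have "(\<lambda>M. \<Sum>m<M. r ^ Suc m) \<longlonglongrightarrow> r / (1 - r)" by (simp add: sums_def)
  then obtain M where M: "(\<Sum>m<M. r ^ Suc m) > 1 / \<delta>"
    using eventually_happens'[OF sequentially_bot order_tendstoD(1)[OF _ big]] by blast
  have "(\<lambda>N. F N 0 * (\<Sum>m<M. r ^ Suc m) - (\<Sum>m<M. real (Suc m) * \<epsilon> N))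
      \<longlonglongrightarrow> 1 * (\<Sum>m<M. r ^ Suc m) - (\<Sum>m<M. real (Suc m) * 0)"
    using F_0 eps_lim by (intro tendsto_intros)
  then have "eventually (\<lambda>N. F N 0 * (\<Sum>m<M. r ^ Suc m) - (\<Sum>m<M. real (Suc m) * \<epsilon> N) > 1 / \<delta>) sequentially"
    using M by (intro order_tendstoD(1)) auto
  then show ?thesis
    using eventually_block[OF d] order_tendstoD(2)[OF eps_lim half_gt_zero[OF k]]
  proof eventually_elim
    case (elim N)
    interpret approx_memoryless_block "F N" "\<tau> N" "\<epsilon> N" "T N" \<delta> by (rule elim(2))
    have "\<not> r \<le> p - \<epsilon> N" using weighted_block_sum_le[OF r0, of M] elim(1) by linarith
    then show ?case using elim(3) by (simp add: p_def h_def r_def)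
  qed
qed

lemma block_surv_ge:
  assumes d: "\<delta> > 0" and k: "\<kappa> > 0"
  shows "eventually (\<lambda>N. 1 - \<delta> - \<kappa> \<le> F N (\<delta> * T N - \<tau> N)) sequentially"
  using eventually_block[OF d] order_tendstoD(2)[OF eps_lim k]
proof eventually_elim
  case (elim N)
  interpret approx_memoryless_block "F N" "\<tau> N" "\<epsilon> N" "T N" \<delta> by (rule elim(1))
  show ?case using p_ge elim(2) by (simp add: p_def h_def)
qed

lemma F_scaled_le:
  assumes y: "y > 0" and n: "n \<ge> 1" and g: "\<gamma> > 0"
  shows "eventually (\<lambda>N. F N (y * T N) < (1 / (1 + y / real n)) ^ n + \<gamma>) sequentially"
proof -
  define \<delta> where "\<delta> = y / real n"
  define u where "u = 1 / (1 + \<delta>)"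
  have d: "\<delta> > 0" using y n by (simp add: \<delta>_def)
  have "((\<lambda>\<kappa>. (u + 2 * \<kappa>) ^ n) \<longlongrightarrow> (u + 2 * 0) ^ n) (at_right 0)"
    by (intro tendsto_intros)
  then have "eventually (\<lambda>\<kappa>. (u + 2 * \<kappa>) ^ n < u ^ n + \<gamma>) (at_right 0)"
    using g by (intro order_tendstoD(2)) auto
  then obtain \<kappa> where k: "\<kappa> > 0" and close: "(u + 2 * \<kappa>) ^ n < u ^ n + \<gamma>"
    using ex_pos_of_eventually_at_right_0 by blast
  show ?thesis
    using eventually_block[OF d] block_surv_le[OF d k] order_tendstoD(2)[OF eps_lim k]
  proof eventually_elim
    case (elim N)
    interpret approx_memoryless_block "F N" "\<tau> N" "\<epsilon> N" "T N" \<delta> by (rule elim(1))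
    have "y * T N = real n * h" unfolding h_def using n by (simp add: \<delta>_def)
    then have "F N (y * T N) \<le> (p + \<epsilon> N) ^ n" using F_blocks_le by simp
    also have "\<dots> \<le> (u + 2 * \<kappa>) ^ n"
      using elim(2,3) p_nonneg eps by (intro power_mono) (auto simp: p_def h_def u_def)
    finally show ?case using close by (simp add: u_def \<delta>_def)
  qed
qed

lemma F_scaled_ge:
  assumes y: "y > 0" and n: "y < real n" and g: "\<gamma> > 0"
  shows "eventually (\<lambda>N. (1 - y / real n) ^ n - \<gamma> < F N (y * T N)) sequentially"
proof -
  define \<delta> where "\<delta> = y / real n"
  define w where "w = 1 - \<delta>"
  have n0: "real n > 0" using y n by simp
  have d: "\<delta> > 0" and w0: "w > 0" using y n n0 by (simp_all add: \<delta>_def w_def field_simps)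
  have "((\<lambda>\<kappa>. w - 2 * \<kappa>) \<longlongrightarrow> w - 2 * 0) (at_right 0)"
    and "((\<lambda>\<kappa>. (w - 2 * \<kappa>) ^ n) \<longlongrightarrow> (w - 2 * 0) ^ n) (at_right 0)"
    by (intro tendsto_intros)+
  then have "eventually (\<lambda>\<kappa>. w - 2 * \<kappa> > 0 \<and> (w - 2 * \<kappa>) ^ n > w ^ n - \<gamma> / 2) (at_right 0)"
    using w0 g by (intro eventually_conj order_tendstoD(1)) auto
  then obtain \<kappa> where k: "\<kappa> > 0" and wk: "w - 2 * \<kappa> > 0" and close: "(w - 2 * \<kappa>) ^ n > w ^ n - \<gamma> / 2"
    using ex_pos_of_eventually_at_right_0 by blast
  have "(\<lambda>N. F N 0 * (w - 2 * \<kappa>) ^ n - real n * \<epsilon> N) \<longlonglongrightarrow> 1 * (w - 2 * \<kappa>) ^ n - real n * 0"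
    using F_0 eps_lim by (intro tendsto_intros)
  then have start: "eventually (\<lambda>N. F N 0 * (w - 2 * \<kappa>) ^ n - real n * \<epsilon> N > w ^ n - \<gamma>) sequentially"
    using close g by (intro order_tendstoD(1)) auto
  show ?thesis
    using eventually_block[OF d] block_surv_ge[OF d k] order_tendstoD(2)[OF eps_lim k] start
  proof eventually_elim
    case (elim N)
    interpret approx_memoryless_block "F N" "\<tau> N" "\<epsilon> N" "T N" \<delta> by (rule elim(1))
    have "y * T N = real n * h" unfolding h_def using n0 by (simp add: \<delta>_def)
    have "w - 2 * \<kappa> \<le> q" using elim(2,3) by (simp add: q_def p_def h_def w_def)
    then have "F N 0 * (w - 2 * \<kappa>) ^ n \<le> F N 0 * q ^ n"
      using wk nn[of 0] by (intro mult_left_mono power_mono) auto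
    then have "w ^ n - \<gamma> < F N (real n * h)" using elim(4) F_blocks_ge[of n] by linarith
    then show ?case using \<open>y * T N = real n * h\<close> by (simp add: w_def \<delta>_def)
  qed
qed

theorem F_scaled_tendsto_exp:
  assumes y: "y > 0"
  shows "(\<lambda>N. F N (y * T N)) \<longlonglongrightarrow> exp (- y)"
proof (rule tendstoI)
  fix \<gamma> :: real assume g: "\<gamma> > 0"
  have "(\<lambda>n. inverse ((1 + y / real n) ^ n)) \<longlonglongrightarrow> inverse (exp y)"
    by (intro tendsto_inverse tendsto_exp_limit_sequentially) simp
  then have up: "(\<lambda>n. (1 / (1 + y / real n)) ^ n) \<longlonglongrightarrow> exp (- y)"
    by (simp add: exp_minus power_one_over inverse_eq_divide)
  have low: "(\<lambda>n. (1 - y / real n) ^ n) \<longlonglongrightarrow> exp (- y)"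
    using tendsto_exp_limit_sequentially[of "- y"] by simp
  have "eventually (\<lambda>n. (1 / (1 + y / real n)) ^ n < exp (- y) + \<gamma> / 2) sequentially"
    by (rule order_tendstoD(2)[OF up]) (use g in simp)
  moreover have "eventually (\<lambda>n. (1 - y / real n) ^ n > exp (- y) - \<gamma> / 2) sequentially"
    by (rule order_tendstoD(1)[OF low]) (use g in simp)
  ultimately have "eventually (\<lambda>n. (1 / (1 + y / real n)) ^ n < exp (- y) + \<gamma> / 2
      \<and> (1 - y / real n) ^ n > exp (- y) - \<gamma> / 2 \<and> y < real n \<and> n \<ge> 1) sequentially"
    using filterlim_real_sequentially[unfolded filterlim_at_top_dense, rule_format, of y]
      eventually_ge_at_top[of 1]
    by eventually_elim auto
  then obtain n where n1: "(1 / (1 + y / real n)) ^ n < exp (- y) + \<gamma> / 2"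
    and n2: "(1 - y / real n) ^ n > exp (- y) - \<gamma> / 2" and n3: "y < real n" and n4: "n \<ge> 1"
    using eventually_happens'[OF sequentially_bot] by blast
  have g2: "\<gamma> / 2 > 0" using g by simp
  show "eventually (\<lambda>N. dist (F N (y * T N)) (exp (- y)) < \<gamma>) sequentially"
    using F_scaled_le[OF y n4 g2] F_scaled_ge[OF y n3 g2]
  proof eventually_elim
    case (elim N)
    then have "F N (y * T N) < exp (- y) + \<gamma>" "exp (- y) - \<gamma> < F N (y * T N)"
      using n1 n2 by linarith+
    then show ?case by (simp add: dist_real_def abs_less_iff)
  qed
qed

end

section \<open>Convergence to the exponential law\<close>

lemma exists_diverging_vanishing_product:
  fixes b :: "nat \<Rightarrow> real"
  assumes b0: "\<And>N. b N \<ge> 0" and b_lim: "b \<longlonglongrightarrow> 0"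
  shows "\<exists>k :: nat \<Rightarrow> nat. filterlim k at_top sequentially \<and> (\<lambda>N. real (k N) * b N) \<longlonglongrightarrow> 0"
proof -
  define c where "c N = b N + inverse (real (Suc N))" for N
  have c_pos: "c N > 0" for N using b0[of N] by (simp add: c_def add_nonneg_pos)
  have c_lim: "c \<longlonglongrightarrow> 0"
    using tendsto_add[OF b_lim LIMSEQ_inverse_real_of_nat] by (simp add: c_def[abs_def])
  define k where "k N = nat \<lfloor>inverse (sqrt (c N))\<rfloor>" for N
  have "filterlim k at_top sequentially"
    unfolding k_def
    by (rule filterlim_compose[OF filterlim_nat_sequentially
          filterlim_compose[OF filterlim_floor_sequentially filterlim_inverse_at_top]])
       (use tendsto_real_sqrt[OF c_lim] c_pos in auto)
  moreover have "(\<lambda>N. real (k N) * b N) \<longlonglongrightarrow> 0"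
  proof (rule Lim_null_comparison[OF always_eventually tendsto_real_sqrt[OF c_lim, simplified]], intro allI)
    fix N
    have k_le: "real (k N) \<le> inverse (sqrt (c N))"
      using c_pos[of N] unfolding k_def by (simp add: of_nat_nat)
    have "norm (real (k N) * b N) \<le> inverse (sqrt (c N)) * c N"
      using k_le b0[of N] by (simp add: c_def mult_mono add_increasing2)
    also have "\<dots> = sqrt (c N)"
      using c_pos[of N] real_sqrt_mult_self[of "c N"] by (simp add: field_simps)
    finally show "norm (real (k N) * b N) \<le> sqrt (c N)" .
  qed
  ultimately show ?thesis by blast
qed

lemma cdf_exponential_1:
  "cdf (density lborel (exponential_density 1)) x = (if 0 \<le> x then 1 - exp (- x) else 0)"
proof -
  have "emeasure (density lborel (exponential_density 1)) {..x} = ennreal (erlang_CDF 0 1 x)"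
    by (rule emeasure_erlang_density) simp
  moreover have "erlang_CDF 0 1 x \<ge> 0" by (simp add: erlang_CDF_0)
  ultimately show ?thesis
    unfolding cdf_def2 measure_def by (simp add: erlang_CDF_0)
qed

lemma weak_conv_exponential_1:
  fixes H :: "nat \<Rightarrow> real \<Rightarrow> real" and T :: "nat \<Rightarrow> real"
  assumes neg: "\<And>N t. t < 0 \<Longrightarrow> H N t = 0" and T_pos: "eventually (\<lambda>N. T N > 0) sequentially"
    and at_0: "(\<lambda>N. H N 0) \<longlonglongrightarrow> 0"
    and pos: "\<And>y. y > 0 \<Longrightarrow> (\<lambda>N. H N (y * T N)) \<longlonglongrightarrow> 1 - exp (- y)"
  shows "weak_conv (\<lambda>N t. H N (t * T N)) (cdf (density lborel (exponential_density 1)))"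
  unfolding weak_conv_def
proof (intro allI impI)
  fix x :: real
  consider "x > 0" | "x = 0" | "x < 0" by linarith
  then show "(\<lambda>N. H N (x * T N)) \<longlonglongrightarrow> cdf (density lborel (exponential_density 1)) x"
  proof cases
    case 3
    have "eventually (\<lambda>N. H N (x * T N) = 0) sequentially"
      using T_pos by eventually_elim (use 3 neg mult_neg_pos in blast)
    then show ?thesis using 3 by (simp add: cdf_exponential_1 tendsto_eventually)
  qed (use pos at_0 in \<open>simp_all add: cdf_exponential_1\<close>)
qed

lemma surv_transfer_bounds:
  fixes F G :: "real \<Rightarrow> real"
  assumes anti: "antimono_on {0..} F"
    and G_up: "\<And>t s. t \<ge> 0 \<Longrightarrow> s \<ge> 0 \<Longrightarrow> G (t + \<tau> + s) \<le> F s + \<epsilon>"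
    and G_low: "\<And>t s. t \<ge> 0 \<Longrightarrow> s \<ge> 0 \<Longrightarrow> F s - \<epsilon> - (1 - G (t + \<tau>)) \<le> G (t + \<tau> + s)"
    and early: "\<And>t. t < S \<Longrightarrow> 1 - G t \<le> \<eta>"
    and lag: "0 < \<tau>" "2 * \<tau> < S" "\<tau> < \<zeta> * T" and S_T: "S < \<zeta> * T" and \<zeta>: "0 < \<zeta>" "\<zeta> < y" and T: "0 < T"
  shows "G (y * T) \<le> F ((y - \<zeta>) * T) + \<epsilon>" and "F ((y + \<zeta>) * T) - \<epsilon> - \<eta> \<le> G (y * T)"
proof -
  define s where "s = y * T - S + \<tau>"
  define t where "t = S - 2 * \<tau>"
  have split: "y * T = t + \<tau> + s" and t0: "t \<ge> 0" using lag by (simp_all add: s_def t_def)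
  have s_ge: "(y - \<zeta>) * T \<le> s" and s_le: "s \<le> (y + \<zeta>) * T"
    using lag S_T by (simp_all add: s_def algebra_simps)
  have s0: "0 \<le> (y - \<zeta>) * T" and "0 \<le> (y + \<zeta>) * T" using \<zeta> T by simp_all
  have "G (y * T) \<le> F s + \<epsilon>" unfolding split using G_up t0 s0 s_ge by simp
  also have "F s \<le> F ((y - \<zeta>) * T)" using monotone_onD[OF anti _ _ s_ge] s0 s_ge by simp
  finally show "G (y * T) \<le> F ((y - \<zeta>) * T) + \<epsilon>" by simp
  have "F ((y + \<zeta>) * T) \<le> F s" using monotone_onD[OF anti _ _ s_le] s0 s_ge \<open>0 \<le> (y + \<zeta>) * T\<close> by simp
  moreover have "1 - G (t + \<tau>) \<le> \<eta>" using early lag by (simp add: t_def)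
  moreover have "F s - \<epsilon> - (1 - G (t + \<tau>)) \<le> G (y * T)" unfolding split using G_low t0 s0 s_ge by simp
  ultimately show "F ((y + \<zeta>) * T) - \<epsilon> - \<eta> \<le> G (y * T)" by simp
qed

lemma tendsto_exp_transfer:
  fixes F G :: "nat \<Rightarrow> real \<Rightarrow> real" and \<tau> \<epsilon> \<eta> S T :: "nat \<Rightarrow> real"
  assumes anti: "\<And>N. antimono_on {0..} (F N)"
    and F_lim: "\<And>z. z > 0 \<Longrightarrow> (\<lambda>N. F N (z * T N)) \<longlonglongrightarrow> exp (- z)"
    and G_up: "\<And>N t s. t \<ge> 0 \<Longrightarrow> s \<ge> 0 \<Longrightarrow> G N (t + \<tau> N + s) \<le> F N s + \<epsilon> N"
    and G_low: "\<And>N t s. t \<ge> 0 \<Longrightarrow> s \<ge> 0 \<Longrightarrow> F N s - \<epsilon> N - (1 - G N (t + \<tau> N)) \<le> G N (t + \<tau> N + s)"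
    and early: "\<And>N t. t < S N \<Longrightarrow> 1 - G N t \<le> \<eta> N"
    and lag_pos: "\<And>N. \<tau> N > 0" and eps_lim: "\<epsilon> \<longlonglongrightarrow> 0" and eta_lim: "\<eta> \<longlonglongrightarrow> 0"
    and S_T: "(\<lambda>N. S N / T N) \<longlonglongrightarrow> 0" and lag_T: "(\<lambda>N. \<tau> N / T N) \<longlonglongrightarrow> 0"
    and lag_S: "(\<lambda>N. \<tau> N / S N) \<longlonglongrightarrow> 0"
    and S_pos: "eventually (\<lambda>N. S N > 0) sequentially" and T_pos: "eventually (\<lambda>N. T N > 0) sequentially"
    and y: "y > 0"
  shows "(\<lambda>N. G N (y * T N)) \<longlonglongrightarrow> exp (- y)"
proof (rule tendstoI)
  fix \<gamma> :: real assume g: "\<gamma> > 0"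
  have "((\<lambda>\<zeta>. exp (- (y - \<zeta>))) \<longlongrightarrow> exp (- (y - 0))) (at_right 0)"
    and "((\<lambda>\<zeta>. exp (- (y + \<zeta>))) \<longlongrightarrow> exp (- (y + 0))) (at_right 0)"
    by (intro tendsto_intros)+
  then have "eventually (\<lambda>\<zeta>. exp (- (y - \<zeta>)) < exp (- y) + \<gamma> / 2
      \<and> exp (- y) - \<gamma> / 2 < exp (- (y + \<zeta>)) \<and> \<zeta> < y) (at_right 0)"
    using g y by (intro eventually_conj order_tendstoD eventually_at_right_less) auto
  then obtain \<zeta> where \<zeta>: "\<zeta> > 0" "\<zeta> < y" and close: "exp (- (y - \<zeta>)) < exp (- y) + \<gamma> / 2"
    "exp (- y) - \<gamma> / 2 < exp (- (y + \<zeta>))"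
    using ex_pos_of_eventually_at_right_0 by blast
  have "eventually (\<lambda>N. F N ((y - \<zeta>) * T N) < exp (- (y - \<zeta>)) + \<gamma> / 4) sequentially"
    by (rule order_tendstoD(2)[OF F_lim]) (use \<zeta> g in simp_all)
  moreover have "eventually (\<lambda>N. exp (- (y + \<zeta>)) - \<gamma> / 4 < F N ((y + \<zeta>) * T N)) sequentially"
    by (rule order_tendstoD(1)[OF F_lim]) (use \<zeta> g in simp_all)
  moreover have "eventually (\<lambda>N. \<epsilon> N < \<gamma> / 8) sequentially" "eventually (\<lambda>N. \<eta> N < \<gamma> / 8) sequentially"
    using order_tendstoD(2)[OF eps_lim, of "\<gamma> / 8"] order_tendstoD(2)[OF eta_lim, of "\<gamma> / 8"] g
    by simp_all
  moreover have "eventually (\<lambda>N. S N / T N < \<zeta>) sequentially" "eventually (\<lambda>N. \<tau> N / T N < \<zeta>) sequentially"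
    using order_tendstoD(2)[OF S_T \<zeta>(1)] order_tendstoD(2)[OF lag_T \<zeta>(1)] by simp_all
  moreover have "eventually (\<lambda>N. \<tau> N / S N < 1 / 2) sequentially"
    by (rule order_tendstoD(2)[OF lag_S]) simp
  ultimately show "eventually (\<lambda>N. dist (G N (y * T N)) (exp (- y)) < \<gamma>) sequentially"
    using S_pos T_pos
  proof eventually_elim
    case (elim N)
    then have "S N < \<zeta> * T N" "\<tau> N < \<zeta> * T N" "2 * \<tau> N < S N"
      by (simp_all add: field_simps)
    note b = surv_transfer_bounds[where F="F N" and G="G N" and \<tau>="\<tau> N" and \<epsilon>="\<epsilon> N" and \<eta>="\<eta> N"
        and S="S N" and T="T N", OF anti G_up G_low early lag_pos this(3,2,1) \<zeta> elim(9)]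
    have "G N (y * T N) < exp (- y) + \<gamma>" "exp (- y) - \<gamma> < G N (y * T N)"
      using b elim(1-4) close by linarith+
    then show ?case by (simp add: dist_real_def abs_less_iff)
  qed
qed

section \<open>Sequences of chains\<close>

locale hitting_sequence =
  fixes \<Omega> :: "nat \<Rightarrow> 'a set" and R :: "nat \<Rightarrow> 'a \<Rightarrow> 'a \<Rightarrow> real"
    and \<nu> \<mu> :: "nat \<Rightarrow> 'a \<Rightarrow> real" and A :: "nat \<Rightarrow> 'a set" and S :: "nat \<Rightarrow> real"
  assumes fin: "\<And>N. finite (\<Omega> N)" and ne: "\<And>N. \<Omega> N \<noteq> {}"
    and rates: "\<And>N x y. x \<in> \<Omega> N \<Longrightarrow> y \<in> \<Omega> N \<Longrightarrow> x \<noteq> y \<Longrightarrow> R N x y \<ge> 0"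
    and irr: "\<And>N. irreducible (\<Omega> N) (R N)"
    and stat: "\<And>N. stationary (\<Omega> N) (R N) (\<nu> N)"
    and A_sub: "\<And>N. A N \<subseteq> \<Omega> N" and A_ne: "\<And>N. A N \<noteq> {}"
    and nuA: "(\<lambda>N. \<Sum>x\<in>A N. \<nu> N x) \<longlonglongrightarrow> 0"
    and mix_rate: "(\<lambda>N. mixing_time (\<Omega> N) (R N) (\<nu> N) * escape_rate (\<Omega> N) (R N) (A N) (\<nu> N))
                     \<longlonglongrightarrow> 0"
    and mu: "\<And>N. prob_on (\<Omega> N) (\<mu> N)"
    and S_pos: "eventually (\<lambda>N. S N > 0) sequentially"
    and S_low: "(\<lambda>N. mixing_time (\<Omega> N) (R N) (\<nu> N) / S N) \<longlonglongrightarrow> 0"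
    and S_up: "(\<lambda>N. S N / mean_hit (\<Omega> N) (R N) (A N) (\<nu> N)) \<longlonglongrightarrow> 0"
    and early: "(\<lambda>N. hit_lt (\<Omega> N) (R N) (A N) (\<mu> N) (S N)) \<longlonglongrightarrow> 0"
begin

lemma chain: "finite_chain (\<Omega> N) (R N) (\<nu> N) (A N)"
  by unfold_locales (use fin rates irr stat A_sub A_ne in auto)

abbreviation "r N \<equiv> escape_rate (\<Omega> N) (R N) (A N) (\<nu> N)"
abbreviation "T N \<equiv> mean_hit (\<Omega> N) (R N) (A N) (\<nu> N)"
abbreviation "F N \<equiv> finite_chain.surv_from (\<Omega> N) (R N) (A N) (\<nu> N)"
abbreviation "G N \<equiv> finite_chain.surv_from (\<Omega> N) (R N) (A N) (\<mu> N)"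

lemma nu_nonneg: "x \<in> \<Omega> N \<Longrightarrow> \<nu> N x \<ge> 0"
  by (rule finite_chain.nu_nonneg[OF chain])

lemma mu_nonneg: "x \<in> \<Omega> N \<Longrightarrow> \<mu> N x \<ge> 0"
  using mu by (simp add: prob_on_def)

lemma mixing_time_witnesses:
  "\<exists>t. (\<forall>N. t N \<in> finite_chain.mix_times (\<Omega> N) (R N) (\<nu> N))
     \<and> (\<lambda>N. t N / \<bar>S N\<bar> + t N * r N) \<longlonglongrightarrow> 0"
proof -
  define mt where "mt N = mixing_time (\<Omega> N) (R N) (\<nu> N)" for N
  define e where "e N = inverse (real (Suc N) * (1 + r N + inverse \<bar>S N\<bar>))" for N
  have r0: "r N \<ge> 0" for N by (rule finite_chain.escape_rate_nonneg[OF chain])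
  have e_pos: "e N > 0" for N using r0[of N] by (simp add: e_def add_pos_nonneg)
  have "\<forall>N. \<exists>t. t \<in> finite_chain.mix_times (\<Omega> N) (R N) (\<nu> N) \<and> t < mt N + e N"
    using finite_chain.mixing_time_approx[OF chain ne e_pos] by (auto simp: mt_def)
  then obtain t where t: "\<And>N. t N \<in> finite_chain.mix_times (\<Omega> N) (R N) (\<nu> N)"
    and t_le: "\<And>N. t N < mt N + e N" by metis
  have t_pos: "t N > 0" for N using t[of N] by (simp add: finite_chain.mix_times_def[OF chain])
  have "(\<lambda>N. t N / \<bar>S N\<bar> + t N * r N) \<longlonglongrightarrow> 0"
  proof (rule Lim_null_comparison[OF always_eventually], intro allI)
    fix N
    have "0 \<le> inverse \<bar>S N\<bar>" by simp
    then have "1 + r N + inverse \<bar>S N\<bar> \<noteq> 0" using r0[of N] by linarith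
    then have e_le: "e N * (1 + r N + inverse \<bar>S N\<bar>) = inverse (real (Suc N))"
      by (simp add: e_def inverse_mult_distrib)
    have "t N / \<bar>S N\<bar> \<le> (mt N + e N) * inverse \<bar>S N\<bar>"
      using t_le[of N] by (simp add: divide_inverse mult_right_mono)
    moreover have "t N * r N \<le> (mt N + e N) * r N" using t_le[of N] r0[of N] by (simp add: mult_right_mono)
    moreover have "e N * inverse \<bar>S N\<bar> + e N * r N \<le> inverse (real (Suc N))"
      using e_le e_pos[of N] by (simp add: algebra_simps)
    moreover have "mt N * inverse \<bar>S N\<bar> = \<bar>mt N / S N\<bar>"
      using finite_chain.mixing_time_nonneg[OF chain ne, of N] by (simp add: mt_def abs_mult divide_inverse)
    ultimately show "norm (t N / \<bar>S N\<bar> + t N * r N) \<le> \<bar>mt N / S N\<bar> + mt N * r N + inverse (real (Suc N))"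
      using t_pos[of N] r0[of N] by (simp add: algebra_simps)
  next
    show "(\<lambda>N. \<bar>mt N / S N\<bar> + mt N * r N + inverse (real (Suc N))) \<longlonglongrightarrow> 0"
      using tendsto_add[OF tendsto_add[OF tendsto_rabs_zero[OF S_low] mix_rate] LIMSEQ_inverse_real_of_nat]
      by (simp add: mt_def)
  qed
  with t show ?thesis by blast
qed

text \<open>
  The lag \<open>\<tau> = (k + 1) t\<close> with \<open>t\<close> a mixing time and \<open>k \<rightarrow> \<infinity>\<close> slowly: long enough for the total
  variation distance to equilibrium to vanish, short enough to be negligible on the scales
  \<open>S\<close> and \<open>1 / r\<close>.
\<close>
lemma mixing_time_multiples:
  obtains t :: "nat \<Rightarrow> real" and k :: "nat \<Rightarrow> nat"
  where "\<And>N. t N \<in> finite_chain.mix_times (\<Omega> N) (R N) (\<nu> N)" and "filterlim k at_top sequentially"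
    and "(\<lambda>N. real (Suc (k N)) * t N / S N) \<longlonglongrightarrow> 0"
    and "(\<lambda>N. real (Suc (k N)) * t N * r N) \<longlonglongrightarrow> 0"
proof -
  obtain t where t: "\<And>N. t N \<in> finite_chain.mix_times (\<Omega> N) (R N) (\<nu> N)"
    and b_lim: "(\<lambda>N. t N / \<bar>S N\<bar> + t N * r N) \<longlonglongrightarrow> 0"
    using mixing_time_witnesses by blast
  have t_pos: "t N > 0" for N using t[of N] by (simp add: finite_chain.mix_times_def[OF chain])
  have r0: "r N \<ge> 0" for N by (rule finite_chain.escape_rate_nonneg[OF chain])
  define b where "b N = t N / \<bar>S N\<bar> + t N * r N" for N
  have b0: "b N \<ge> 0" for N using t_pos[of N] r0[of N] by (simp add: b_def)
  obtain k where k: "filterlim k at_top sequentially" and kb: "(\<lambda>N. real (k N) * b N) \<longlonglongrightarrow> 0"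
    using exists_diverging_vanishing_product[OF b0 b_lim[folded b_def]] by blast
  have kb1: "(\<lambda>N. real (Suc (k N)) * b N) \<longlonglongrightarrow> 0"
    using tendsto_add[OF kb b_lim[folded b_def]] by (simp add: algebra_simps)
  have "(\<lambda>N. real (Suc (k N)) * t N / S N) \<longlonglongrightarrow> 0"
  proof (rule Lim_null_comparison[OF always_eventually kb1], intro allI)
    fix N
    have "norm (real (Suc (k N)) * t N / S N) = real (Suc (k N)) * (t N / \<bar>S N\<bar>)"
      using t_pos[of N] by (simp add: abs_divide abs_mult)
    also have "\<dots> \<le> real (Suc (k N)) * b N"
      using t_pos[of N] r0[of N] by (intro mult_left_mono) (simp_all add: b_def)
    finally show "norm (real (Suc (k N)) * t N / S N) \<le> real (Suc (k N)) * b N" .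
  qed
  moreover have "(\<lambda>N. real (Suc (k N)) * t N * r N) \<longlonglongrightarrow> 0"
  proof (rule Lim_null_comparison[OF always_eventually kb1], intro allI)
    fix N
    have "norm (real (Suc (k N)) * t N * r N) = real (Suc (k N)) * (t N * r N)"
      using t_pos[of N] r0[of N] by (simp add: abs_mult)
    also have "\<dots> \<le> real (Suc (k N)) * b N"
      using t_pos[of N] by (intro mult_left_mono) (simp_all add: b_def)
    finally show "norm (real (Suc (k N)) * t N * r N) \<le> real (Suc (k N)) * b N" .
  qed
  ultimately show ?thesis using that t k by blast
qed

lemma lag_sequence:
  obtains \<tau> D :: "nat \<Rightarrow> real"
  where "\<And>N. \<tau> N > 0" and "\<And>N. D N \<ge> 0" and "D \<longlonglongrightarrow> 0"
    and "\<And>N y. y \<in> \<Omega> N \<Longrightarrow> tv_dist (\<Omega> N) (trans_prob (\<Omega> N) (R N) (\<tau> N) y) (\<nu> N) \<le> D N"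
    and "(\<lambda>N. \<tau> N / S N) \<longlonglongrightarrow> 0" and "(\<lambda>N. \<tau> N / T N) \<longlonglongrightarrow> 0"
    and "(\<lambda>N. 1 - F N (\<tau> N)) \<longlonglongrightarrow> 0"
proof -
  obtain t k where t: "\<And>N. t N \<in> finite_chain.mix_times (\<Omega> N) (R N) (\<nu> N)"
    and k: "filterlim k at_top sequentially"
    and t_S: "(\<lambda>N. real (Suc (k N)) * t N / S N) \<longlonglongrightarrow> 0"
    and t_r: "(\<lambda>N. real (Suc (k N)) * t N * r N) \<longlonglongrightarrow> 0"
    using mixing_time_multiples by blast
  define \<tau> where "\<tau> N = real (Suc (k N)) * t N" for N
  have \<tau>_pos: "\<tau> N > 0" for N using t[of N] by (simp add: \<tau>_def finite_chain.mix_times_def[OF chain])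
  have \<tau>_S: "(\<lambda>N. \<tau> N / S N) \<longlonglongrightarrow> 0" using t_S by (simp add: \<tau>_def)
  have \<tau>_T: "(\<lambda>N. \<tau> N / T N) \<longlonglongrightarrow> 0"
  proof -
    have "eventually (\<lambda>N. \<tau> N / S N * (S N / T N) = \<tau> N / T N) sequentially"
      using S_pos by eventually_elim simp
    from Lim_transform_eventually[OF tendsto_mult[OF \<tau>_S S_up] this] show ?thesis by simp
  qed
  have hit: "(\<lambda>N. 1 - F N (\<tau> N)) \<longlonglongrightarrow> 0"
  proof (rule Lim_null_comparison[OF always_eventually])
    show "\<forall>N. norm (1 - F N (\<tau> N)) \<le> (\<Sum>x\<in>A N. \<nu> N x) + \<tau> N * r N"
      using finite_chain.stationary_hit_prob_le[OF chain] \<tau>_pos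
        finite_chain.surv_from_le_1[OF chain finite_chain.prob_on_nu[OF chain]]
      by (simp add: less_imp_le)
    show "(\<lambda>N. (\<Sum>x\<in>A N. \<nu> N x) + \<tau> N * r N) \<longlonglongrightarrow> 0"
      using tendsto_add[OF nuA t_r] by (simp add: \<tau>_def)
  qed
  have D_lim: "(\<lambda>N. (1 / 2 :: real) ^ (k N + 2)) \<longlonglongrightarrow> 0"
  proof -
    have "(\<lambda>n. (1 / 2 :: real) ^ (n + 2)) \<longlonglongrightarrow> 0"
      using LIMSEQ_ignore_initial_segment[OF LIMSEQ_power_zero[of "1 / 2 :: real"], of 2] by simp
    then show ?thesis by (rule filterlim_compose[OF _ k])
  qed
  show ?thesis
  proof (rule that[OF \<tau>_pos _ D_lim _ \<tau>_S \<tau>_T hit])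
    show "tv_dist (\<Omega> N) (trans_prob (\<Omega> N) (R N) (\<tau> N) y) (\<nu> N) \<le> (1 / 2) ^ (k N + 2)"
      if "y \<in> \<Omega> N" for N y
      using finite_chain.tv_dist_P_mix_time_multiple[OF chain t, of N "k N"] that by (simp add: \<tau>_def)
  qed simp
qed

lemma mean_hit_eventually_pos: "eventually (\<lambda>N. T N > 0) sequentially"
proof -
  obtain \<tau> D where \<tau>_pos: "\<And>N. \<tau> N > 0" and D0: "\<And>N. D N \<ge> 0" and D_lim: "D \<longlonglongrightarrow> 0"
    and tv: "\<And>N y. y \<in> \<Omega> N \<Longrightarrow> tv_dist (\<Omega> N) (trans_prob (\<Omega> N) (R N) (\<tau> N) y) (\<nu> N) \<le> D N"
    and \<tau>_S: "(\<lambda>N. \<tau> N / S N) \<longlonglongrightarrow> 0" and \<tau>_T: "(\<lambda>N. \<tau> N / T N) \<longlonglongrightarrow> 0"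
    and hit: "(\<lambda>N. 1 - F N (\<tau> N)) \<longlonglongrightarrow> 0"
    using lag_sequence by blast
  show ?thesis
    using order_tendstoD(2)[OF hit zero_less_one]
  proof eventually_elim
    case (elim N)
    have anti: "antimono_on {0..} (F N)"
      by (rule finite_chain.surv_from_antimono[OF chain nu_nonneg])
    have nn: "F N t \<ge> 0" for t by (rule finite_chain.surv_from_nonneg[OF chain nu_nonneg])
    have "\<tau> N * F N (0 + \<tau> N) \<le> integral {0..0 + \<tau> N} (F N)"
      by (rule integral_antimono_on_interval_bounds(2)[OF anti]) (use \<tau>_pos[of N] in auto)
    also have "\<dots> \<le> integral {0..} (F N)"
      by (rule integral_le_integral_halfline[OF anti nn finite_chain.surv_from_integrable[OF chain]])
         (use \<tau>_pos[of N] in auto)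
    also have "\<dots> = T N" by (rule finite_chain.mean_hit_eq_integral[OF chain, symmetric])
    finally show ?case using \<tau>_pos[of N] elim by (smt (verit) mult_pos_pos)
  qed
qed

lemma stationary_surv_tendsto_exp:
  assumes y: "y > 0"
  shows "(\<lambda>N. F N (y * T N)) \<longlonglongrightarrow> exp (- y)"
proof -
  obtain \<tau> D where \<tau>_pos: "\<And>N. \<tau> N > 0" and D0: "\<And>N. D N \<ge> 0" and D_lim: "D \<longlonglongrightarrow> 0"
    and tv: "\<And>N y. y \<in> \<Omega> N \<Longrightarrow> tv_dist (\<Omega> N) (trans_prob (\<Omega> N) (R N) (\<tau> N) y) (\<nu> N) \<le> D N"
    and \<tau>_S: "(\<lambda>N. \<tau> N / S N) \<longlonglongrightarrow> 0" and \<tau>_T: "(\<lambda>N. \<tau> N / T N) \<longlonglongrightarrow> 0"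
    and hit: "(\<lambda>N. 1 - F N (\<tau> N)) \<longlonglongrightarrow> 0"
    using lag_sequence by blast
  define \<epsilon> where "\<epsilon> N = D N + (1 - F N (\<tau> N))" for N
  interpret approx_memoryless_sequence F \<tau> \<epsilon> T
  proof unfold_locales
    fix N :: nat and t s :: real assume "t \<ge> 0" "s \<ge> 0"
    note bounds = finite_chain.surv_from_stationary_lag_bounds[OF chain tv D0 less_imp_le[OF \<tau>_pos] this]
    show "F N (t + \<tau> N + s) \<le> F N t * (F N s + \<epsilon> N)"
      and "F N t * (F N s - \<epsilon> N) - \<epsilon> N \<le> F N (t + \<tau> N + s)"
      using bounds by (simp_all add: \<epsilon>_def)
  qed (use finite_chain.surv_from_antimono[OF chain nu_nonneg] finite_chain.surv_from_nonneg[OF chain nu_nonneg]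
      finite_chain.surv_from_le_1[OF chain finite_chain.prob_on_nu[OF chain]]
      finite_chain.surv_from_integrable[OF chain] finite_chain.mean_hit_eq_integral[OF chain]
      finite_chain.surv_from_stationary_0_eq[OF chain] tendsto_diff[OF tendsto_const nuA, of 1]
      tendsto_add[OF D_lim hit] D0 \<tau>_pos \<tau>_T mean_hit_eventually_pos
      in \<open>auto simp: \<epsilon>_def[abs_def] less_imp_le add_nonneg_nonneg\<close>)
  show ?thesis by (rule F_scaled_tendsto_exp[OF y])
qed

lemma hit_cdf_le_hit_lt: "t < S N \<Longrightarrow> hit_cdf (\<Omega> N) (R N) (A N) (\<mu> N) t \<le> hit_lt (\<Omega> N) (R N) (A N) (\<mu> N) (S N)"
  unfolding hit_lt_def
proof (rule cSUP_upper)
  show "bdd_above ((\<lambda>t. hit_cdf (\<Omega> N) (R N) (A N) (\<mu> N) t) ` {..<S N})"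
    using finite_chain.hit_cdf_eq_surv_from[OF chain mu]
      finite_chain.surv_from_nonneg[OF chain mu_nonneg] by (intro bdd_aboveI[of _ 1]) auto
qed simp

lemma initial_surv_tendsto_exp:
  assumes y: "y > 0"
  shows "(\<lambda>N. G N (y * T N)) \<longlonglongrightarrow> exp (- y)"
proof -
  obtain \<tau> D where \<tau>_pos: "\<And>N. \<tau> N > 0" and D0: "\<And>N. D N \<ge> 0" and D_lim: "D \<longlonglongrightarrow> 0"
    and tv: "\<And>N y. y \<in> \<Omega> N \<Longrightarrow> tv_dist (\<Omega> N) (trans_prob (\<Omega> N) (R N) (\<tau> N) y) (\<nu> N) \<le> D N"
    and \<tau>_S: "(\<lambda>N. \<tau> N / S N) \<longlonglongrightarrow> 0" and \<tau>_T: "(\<lambda>N. \<tau> N / T N) \<longlonglongrightarrow> 0"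
    and hit: "(\<lambda>N. 1 - F N (\<tau> N)) \<longlonglongrightarrow> 0"
    using lag_sequence by blast
  have anti: "antimono_on {0..} (F N)" for N
    by (rule finite_chain.surv_from_antimono[OF chain nu_nonneg])
  have G_up: "G N (t + \<tau> N + s) \<le> F N s + D N"
    and G_low: "F N s - D N - (1 - G N (t + \<tau> N)) \<le> G N (t + \<tau> N + s)"
    if "t \<ge> 0" "s \<ge> 0" for N t s
    using finite_chain.surv_from_initial_lag_bounds[OF chain mu tv[where N=N] D0 less_imp_le[OF \<tau>_pos] that]
    by simp_all
  have before_S: "1 - G N t \<le> hit_lt (\<Omega> N) (R N) (A N) (\<mu> N) (S N)" if "t < S N" for N t
    using hit_cdf_le_hit_lt[OF that] finite_chain.hit_cdf_eq_surv_from[OF chain mu] by simp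
  show ?thesis
    by (rule tendsto_exp_transfer[OF anti stationary_surv_tendsto_exp G_up G_low before_S \<tau>_pos D_lim
          early S_up \<tau>_T \<tau>_S S_pos mean_hit_eventually_pos y])
qed

end

theorem corollary3p6:
  fixes \<Omega> :: "nat \<Rightarrow> 'a set" and R :: "nat \<Rightarrow> 'a \<Rightarrow> 'a \<Rightarrow> real"
    and \<nu> \<mu> :: "nat \<Rightarrow> 'a \<Rightarrow> real" and A :: "nat \<Rightarrow> 'a set" and S :: "nat \<Rightarrow> real"
  assumes fin: "\<And>N. finite (\<Omega> N)" and ne: "\<And>N. \<Omega> N \<noteq> {}"
    and rates: "\<And>N x y. x \<in> \<Omega> N \<Longrightarrow> y \<in> \<Omega> N \<Longrightarrow> x \<noteq> y \<Longrightarrow> R N x y \<ge> 0"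
    and irr: "\<And>N. irreducible (\<Omega> N) (R N)"
    and stat: "\<And>N. stationary (\<Omega> N) (R N) (\<nu> N)"
    and A_sub: "\<And>N. A N \<subseteq> \<Omega> N" and A_ne: "\<And>N. A N \<noteq> {}"
    and nuA: "(\<lambda>N. \<Sum>x\<in>A N. \<nu> N x) \<longlonglongrightarrow> 0"
    and mix_rate: "(\<lambda>N. mixing_time (\<Omega> N) (R N) (\<nu> N) * escape_rate (\<Omega> N) (R N) (A N) (\<nu> N))
                     \<longlonglongrightarrow> 0"
    and mu: "\<And>N. prob_on (\<Omega> N) (\<mu> N)"
    and S_pos: "eventually (\<lambda>N. S N > 0) sequentially"
    and S_low: "(\<lambda>N. mixing_time (\<Omega> N) (R N) (\<nu> N) / S N) \<longlonglongrightarrow> 0"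
    and S_up: "(\<lambda>N. S N / mean_hit (\<Omega> N) (R N) (A N) (\<nu> N)) \<longlonglongrightarrow> 0"
    and early: "(\<lambda>N. hit_lt (\<Omega> N) (R N) (A N) (\<mu> N) (S N)) \<longlonglongrightarrow> 0"
  shows "weak_conv
           (\<lambda>N t. hit_cdf (\<Omega> N) (R N) (A N) (\<mu> N) (t * mean_hit (\<Omega> N) (R N) (A N) (\<nu> N)))
           (cdf (density lborel (exponential_density 1)))"
proof -
  interpret hitting_sequence \<Omega> R \<nu> \<mu> A S
    by (rule hitting_sequence.intro) fact+
  have cdf_eq: "hit_cdf (\<Omega> N) (R N) (A N) (\<mu> N) t = 1 - G N t" for N t
    by (rule finite_chain.hit_cdf_eq_surv_from[OF chain mu])
  show ?thesis
  proof (rule weak_conv_exponential_1[OF _ mean_hit_eventually_pos])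
    show "hit_cdf (\<Omega> N) (R N) (A N) (\<mu> N) t = 0" if "t < 0" for N t
      using that by (simp add: hit_cdf_def surv_def)
    show "(\<lambda>N. hit_cdf (\<Omega> N) (R N) (A N) (\<mu> N) 0) \<longlonglongrightarrow> 0"
    proof (rule Lim_null_comparison[OF _ early])
      show "eventually (\<lambda>N. norm (hit_cdf (\<Omega> N) (R N) (A N) (\<mu> N) 0)
          \<le> hit_lt (\<Omega> N) (R N) (A N) (\<mu> N) (S N)) sequentially"
        using S_pos by eventually_elim
          (use hit_cdf_le_hit_lt cdf_eq finite_chain.surv_from_le_1[OF chain mu] in auto)
    qed
    show "(\<lambda>N. hit_cdf (\<Omega> N) (R N) (A N) (\<mu> N) (y * T N)) \<longlonglongrightarrow> 1 - exp (- y)" if "y > 0" for y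
      unfolding cdf_eq by (intro tendsto_diff tendsto_const initial_surv_tendsto_exp that)
  qed
qed

end
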